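(* Let $\epsilon<1$ be a constant. For any instance oracle $f$ with $\max\{|f(G,v)|: G \text{ an } n\text{-node graph}, v\in G\}=o(n\log n)$ and any deterministic exploration algorithm $A$, for infinitely many $n$ there exist an $n$-node hamiltonian graph $G$ and a starting node $v$ such that the agent executing $A$ with input $f(G,v)$ from $v$ makes at least $n+n^{\epsilon}$ edge traversals before it has visited all nodes and stopped (or fails to explore $G$).
   Context: Model: a graph is a simple connected undirected graph with $n$ nodes. Nodes are unlabeled; at each node of degree $d$ the incident edges carry distinct port numbers $0,\dots,d-1$, arbitrarily assigned. A mobile agent starts at some node. At each step, located at a node $u$ whose degree it knows, it chooses a port at $u$ and traverses the corresponding edge to a neighbor $w$; upon arrival it learns the port number of this edge at $w$ and the degree of $w$. The agent must visit all nodes and stop; the time of exploration is the number of edge traversals. A deterministic exploration algorithm receives as input a binary string (advice); its size is its length. An instance oracle is a function assigning a binary string $f(G,v)$ to each pair $(G,v)$ where $G$ is a port-numbered graph and $v$ is the starting node of the agent. A graph is hamiltonian if it has a cycle through all its nodes. Logarithms are to base 2. *)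

theory Defs
  imports Complex_Main "HOL-Library.Landau_Symbols"
begin

text \<open>Port-numbered graph with nodes 0..<nv. port G u p = (w, q): the edge at port p of u
  leads to w and has port number q at w. Values outside the valid range are normalised.\<close>
record pgraph =
  nv   :: nat
  deg  :: "nat \<Rightarrow> nat"
  port :: "nat \<Rightarrow> nat \<Rightarrow> nat \<times> nat"

definition adj :: "pgraph \<Rightarrow> (nat \<times> nat) set" where
  "adj G = {(u, w). u < nv G \<and> (\<exists>p < deg G u. fst (port G u p) = w)}"

definition pg_wf :: "pgraph \<Rightarrow> bool" where
  "pg_wf G \<longleftrightarrow>
     0 < nv G
   \<and> (\<forall>u. nv G \<le> u \<longrightarrow> deg G u = 0)
   \<and> (\<forall>u p. \<not> (u < nv G \<and> p < deg G u) \<longrightarrow> port G u p = (0, 0))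
   \<and> (\<forall>u < nv G. \<forall>p < deg G u.
          fst (port G u p) < nv G \<and> fst (port G u p) \<noteq> u
        \<and> snd (port G u p) < deg G (fst (port G u p))
        \<and> port G (fst (port G u p)) (snd (port G u p)) = (u, p))
   \<and> (\<forall>u < nv G. inj_on (\<lambda>p. fst (port G u p)) {..<deg G u})
   \<and> (\<forall>u < nv G. \<forall>w < nv G. (u, w) \<in> (adj G)\<^sup>*)"

definition hamiltonian :: "pgraph \<Rightarrow> bool" where
  "hamiltonian G \<longleftrightarrow> (\<exists>xs. distinct xs \<and> set xs = {..<nv G} \<and> 3 \<le> length xs
      \<and> (\<forall>i < length xs. (xs ! i, xs ! ((i + 1) mod length xs)) \<in> adj G))"

text \<open>Agent history: list of (port taken, port at arrival node, degree of arrival node).\<close>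
type_synonym hist = "(nat \<times> nat \<times> nat) list"

text \<open>Deterministic exploration algorithm: given the advice, the degree of the start node
  and the history so far, either stops (None) or chooses a port (Some p).\<close>
type_synonym alg = "bool list \<Rightarrow> nat \<Rightarrow> hist \<Rightarrow> nat option"

fun cfg :: "pgraph \<Rightarrow> alg \<Rightarrow> bool list \<Rightarrow> nat \<Rightarrow> nat \<Rightarrow> nat list \<times> hist" where
  "cfg G A a v 0 = ([v], [])"
| "cfg G A a v (Suc k) =
     (let (ps, h) = cfg G A a v k; u = last ps in
      case A a (deg G v) h of
        None \<Rightarrow> (ps, h)
      | Some p \<Rightarrow> (ps @ [fst (port G u p)],
                  h @ [(p, snd (port G u p), deg G (fst (port G u p)))]))"

definition explores_in :: "pgraph \<Rightarrow> alg \<Rightarrow> bool list \<Rightarrow> nat \<Rightarrow> nat \<Rightarrow> bool" where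
  "explores_in G A a v t \<longleftrightarrow>
     (let (ps, h) = cfg G A a v t in
        length h = t
      \<and> (\<forall>i < t. fst (h ! i) < deg G (ps ! i))
      \<and> A a (deg G v) h = None
      \<and> set ps = {..<nv G})"

end

theory Submission
  imports Defs "HOL-Combinatorics.Permutations" "HOL-Real_Asymp.Real_Asymp"
begin

text \<open>
  Take \<open>m \<approx> \<surd>n\<close> hub nodes \<open>0, \<dots>, m - 1\<close>, each joined to every node of a cycle on the
  other \<open>n - m\<close> nodes. The graphs of the family differ only in the port labels at the cycle
  nodes, a permutation of the \<open>m + 2\<close> neighbour slots at each of them; all are hamiltonian,
  and the agent starts at hub \<open>0\<close>.

  Fix the advice and a labeling explored in time \<open>t\<close>. Every cycle node but the last one
  reached is left by the step after its first visit, and that step enters a visited node (at most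
  \<open>t + 1 - n\<close> such steps), a new hub (at most \<open>m\<close>), or a new cycle node. So at least
  \<open>2n - 2m - 2 - t\<close> cycle nodes \<open>y\<close> are left along the cycle towards a new cycle node
  right after their first visit. At such a \<open>y\<close> the label of the exit port can be swapped
  with any of the \<open>m - 2\<close> hub ports other than the entry port. The swapped labeling, the
  set of such \<open>y\<close> and one bit per node (does the exit lead to the successor?) determine the
  original labeling and the swaps: the run can be replayed step by step, since entry ports are never
  swapped and, once the exit port of \<open>y\<close> is known, the bit identifies the swap at \<open>y\<close>.
  Counting, \<open>(m - 2)\<^bsup>2n - 2m - 2 - t\<^esup> \<le> 2\<^bsup>k + 1\<^esup> 4\<^bsup>n - m\<^esup>\<close> for advice of length at most \<open>k\<close>,
  which forces \<open>k = \<Omega>(n log n)\<close> when \<open>t \<le> n + n\<^sup>\<epsilon>\<close>.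
\<close>

section \<open>Runs\<close>

lemma cfg_Suc:
  "cfg G A a v (Suc k) = (case A a (deg G v) (snd (cfg G A a v k)) of
      None \<Rightarrow> cfg G A a v k
    | Some p \<Rightarrow> (fst (cfg G A a v k) @ [fst (port G (last (fst (cfg G A a v k))) p)],
                snd (cfg G A a v k) @ [(p, snd (port G (last (fst (cfg G A a v k))) p),
                      deg G (fst (port G (last (fst (cfg G A a v k))) p)))]))"
  by (simp add: case_prod_beta Let_def split: option.splits)

declare cfg.simps(2)[simp del]

lemma length_cfg: "length (fst (cfg G A a v k)) = Suc (length (snd (cfg G A a v k)))"
  by (induction k) (auto simp: cfg_Suc split: option.splits)

lemma length_cfg_hist_Suc_le:
  "length (snd (cfg G A a v (Suc k))) \<le> Suc (length (snd (cfg G A a v k)))"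
  by (simp add: cfg_Suc split: option.splits)

lemma length_cfg_hist_le: "length (snd (cfg G A a v k)) \<le> k"
proof (induction k)
  case (Suc k)
  then show ?case using length_cfg_hist_Suc_le[of G A a v k] by linarith
qed simp

lemma cfg_prefix:
  assumes "length (snd (cfg G A a v k)) = k" and "j \<le> k"
  shows "cfg G A a v j = (take (Suc j) (fst (cfg G A a v k)), take j (snd (cfg G A a v k)))"
  using assms
proof (induction k arbitrary: j)
  case 0 then show ?case by simp
next
  case (Suc k)
  have lk: "length (snd (cfg G A a v k)) = k"
    using Suc.prems(1) length_cfg_hist_le[of G A a v k] length_cfg_hist_Suc_le[of G A a v k]
      by linarith
  have "A a (deg G v) (snd (cfg G A a v k)) \<noteq> None"
  proof
    assume "A a (deg G v) (snd (cfg G A a v k)) = None"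
    then have "cfg G A a v (Suc k) = cfg G A a v k" by (simp only: cfg_Suc option.case)
    then show False using Suc.prems(1) lk by (metis n_not_Suc_n)
  qed
  then obtain p where p: "A a (deg G v) (snd (cfg G A a v k)) = Some p" by blast
  obtain x e
    where xe: "cfg G A a v (Suc k) = (fst (cfg G A a v k) @ [x], snd (cfg G A a v k) @ [e])"
    by (simp only: cfg_Suc p option.case)
  have lp: "length (fst (cfg G A a v k)) = Suc k" using length_cfg lk by metis
  show ?case
  proof (cases "j = Suc k")
    case True then show ?thesis using xe lp lk by simp
  next
    case False
    then have "j \<le> k" using Suc.prems(2) by simp
    then show ?thesis using Suc.IH[OF lk, of j] xe lp lk by simp
  qed
qed

definition is_run :: "pgraph \<Rightarrow> alg \<Rightarrow> bool list \<Rightarrow> nat \<Rightarrow> nat \<Rightarrow> nat list \<Rightarrow> hist \<Rightarrow> bool" where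
  "is_run G A a v t ps h \<longleftrightarrow> length ps = Suc t \<and> length h = t \<and> ps ! 0 = v
    \<and> (\<forall>j<t. A a (deg G v) (take j h) = Some (fst (h ! j))
          \<and> fst (h ! j) < deg G (ps ! j)
          \<and> ps ! Suc j = fst (port G (ps ! j) (fst (h ! j)))
          \<and> snd (h ! j) = (snd (port G (ps ! j) (fst (h ! j))), deg G (ps ! Suc j)))
    \<and> A a (deg G v) h = None"

lemma explores_in_is_run:
  assumes "explores_in G A a v t"
  shows "is_run G A a v t (fst (cfg G A a v t)) (snd (cfg G A a v t))"
    and "set (fst (cfg G A a v t)) = {..<nv G}"
proof -
  obtain ps h where c: "cfg G A a v t = (ps, h)" by (cases "cfg G A a v t")
  have lh: "length h = t" and val: "\<forall>i<t. fst (h ! i) < deg G (ps ! i)"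
    and stop: "A a (deg G v) h = None" and st: "set ps = {..<nv G}"
    using assms c by (auto simp: explores_in_def)
  have prefix: "cfg G A a v j = (take (Suc j) ps, take j h)" if "j \<le> t" for j
    using cfg_prefix[of G A a v t j] c lh that by simp
  have lp: "length ps = Suc t" using length_cfg[of G A a v t] c lh by simp
  have "take 1 ps = [v]" using prefix[of 0] by simp
  then have p0: "ps ! 0 = v" using lp by (cases ps) auto
  have step: "A a (deg G v) (take j h) = Some (fst (h ! j))
          \<and> ps ! Suc j = fst (port G (ps ! j) (fst (h ! j)))
          \<and> snd (h ! j) = (snd (port G (ps ! j) (fst (h ! j))), deg G (ps ! Suc j))"
    if j: "j < t" for j
  proof -
    have c1: "cfg G A a v j = (take (Suc j) ps, take j h)" using prefix j by simp
    have c2: "cfg G A a v (Suc j) = (take (Suc (Suc j)) ps, take (Suc j) h)" using prefix j by simp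
    have lj: "last (take (Suc j) ps) = ps ! j" using lp j by (simp add: take_Suc_conv_app_nth)
    have tp: "take (Suc (Suc j)) ps = take (Suc j) ps @ [ps ! Suc j]"
      using lp j by (simp add: take_Suc_conv_app_nth)
    have th: "take (Suc j) h = take j h @ [h ! j]" using lh j by (simp add: take_Suc_conv_app_nth)
    show ?thesis
    proof (cases "A a (deg G v) (take j h)")
      case None
      then have "cfg G A a v (Suc j) = cfg G A a v j" using c1 by (simp add: cfg_Suc)
      then show ?thesis using c1 c2 th by simp
    next
      case (Some p)
      then have "cfg G A a v (Suc j) = (take (Suc j) ps @ [fst (port G (ps ! j) p)],
           take j h @ [(p, snd (port G (ps ! j) p), deg G (fst (port G (ps ! j) p)))])"
        using c1 lj by (simp add: cfg_Suc)
      then show ?thesis using c2 tp th Some by auto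
    qed
  qed
  show "is_run G A a v t (fst (cfg G A a v t)) (snd (cfg G A a v t))"
    unfolding is_run_def using c lp lh p0 step val stop by auto
  show "set (fst (cfg G A a v t)) = {..<nv G}" using c st by simp
qed

lemma is_run_common_prefix:
  assumes r1: "is_run G1 A a v t1 ps1 h1" and r2: "is_run G2 A a v t2 ps2 h2"
    and same_deg: "deg G1 = deg G2"
    and agree: "\<And>j. j < t1 \<Longrightarrow> j < t2 \<Longrightarrow> take (Suc j) ps1 = take (Suc j) ps2 \<Longrightarrow> take j h1 = take j h2
       \<Longrightarrow> fst (h1 ! j) = fst (h2 ! j)
       \<Longrightarrow> port G1 (ps1 ! j) (fst (h1 ! j)) = port G2 (ps1 ! j) (fst (h1 ! j))"
    and "j \<le> t1" and "j \<le> t2"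
  shows "take (Suc j) ps1 = take (Suc j) ps2 \<and> take j h1 = take j h2"
proof -
  note d1 = r1[unfolded is_run_def] and d2 = r2[unfolded is_run_def]
  show ?thesis using \<open>j \<le> t1\<close> \<open>j \<le> t2\<close>
  proof (induction j)
    case 0 then show ?case using d1 d2 by (simp add: take_Suc_conv_app_nth)
  next
    case (Suc j)
    then have j1: "j < t1" and j2: "j < t2" by auto
    have IH: "take (Suc j) ps1 = take (Suc j) ps2" "take j h1 = take j h2"
      using Suc.IH j1 j2 by auto
    have "A a (deg G1 v) (take j h1) = Some (fst (h1 ! j))" using d1 j1 by blast
    moreover have "A a (deg G2 v) (take j h2) = Some (fst (h2 ! j))" using d2 j2 by blast
    ultimately have same_port: "fst (h1 ! j) = fst (h2 ! j)" using IH same_deg by simp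
    have same_pos: "ps1 ! j = ps2 ! j" using arg_cong[OF IH(1), of "\<lambda>xs. xs ! j"] by simp
    have wired: "port G1 (ps1 ! j) (fst (h1 ! j)) = port G2 (ps1 ! j) (fst (h1 ! j))"
      using agree[OF j1 j2 IH same_port] .
    have "ps1 ! Suc j = fst (port G1 (ps1 ! j) (fst (h1 ! j)))"
      and "snd (h1 ! j) = (snd (port G1 (ps1 ! j) (fst (h1 ! j))), deg G1 (ps1 ! Suc j))"
      using d1 j1 by blast+
    moreover have "ps2 ! Suc j = fst (port G2 (ps2 ! j) (fst (h2 ! j)))"
      and "snd (h2 ! j) = (snd (port G2 (ps2 ! j) (fst (h2 ! j))), deg G2 (ps2 ! Suc j))"
      using d2 j2 by blast+
    ultimately have next_pos: "ps1 ! Suc j = ps2 ! Suc j" and "snd (h1 ! j) = snd (h2 ! j)"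
      using wired same_port same_pos same_deg by simp_all
    then have "h1 ! j = h2 ! j" using same_port by (simp add: prod_eq_iff)
    moreover have "Suc j < length ps1" "Suc j < length ps2" "j < length h1" "j < length h2"
      using d1 d2 j1 j2 by simp_all
    ultimately show ?case using IH next_pos by (simp add: take_Suc_conv_app_nth)
  qed
qed

lemma is_run_unique:
  assumes r1: "is_run G1 A a v t1 ps1 h1" and r2: "is_run G2 A a v t2 ps2 h2"
    and same_deg: "deg G1 = deg G2"
    and agree: "\<And>j. j < t1 \<Longrightarrow> j < t2 \<Longrightarrow> take (Suc j) ps1 = take (Suc j) ps2 \<Longrightarrow> take j h1 = take j h2
       \<Longrightarrow> fst (h1 ! j) = fst (h2 ! j)
       \<Longrightarrow> port G1 (ps1 ! j) (fst (h1 ! j)) = port G2 (ps1 ! j) (fst (h1 ! j))"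
  shows "t1 = t2 \<and> ps1 = ps2 \<and> h1 = h2"
proof -
  have prefix: "take (Suc j) ps1 = take (Suc j) ps2 \<and> take j h1 = take j h2"
    if "j \<le> t1" "j \<le> t2" for j
    by (rule is_run_common_prefix[OF r1 r2 same_deg _ that]) (rule agree; assumption)
  have len: "length ps1 = Suc t1" "length h1 = t1" "length ps2 = Suc t2" "length h2 = t2"
    and stop: "A a (deg G1 v) h1 = None" "A a (deg G2 v) h2 = None"
    and go: "\<And>j. j < t1 \<Longrightarrow> A a (deg G1 v) (take j h1) \<noteq> None"
      "\<And>j. j < t2 \<Longrightarrow> A a (deg G2 v) (take j h2) \<noteq> None"
    using r1 r2 by (auto simp: is_run_def)
  have "t1 = t2"
  proof (rule ccontr)
    assume "t1 \<noteq> t2"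
    then consider "t1 < t2" | "t2 < t1" by linarith
    then show False
    proof cases
      case 1
      then have "take t1 h1 = take t1 h2" using prefix[OF order_refl less_imp_le] by blast
      then have "h1 = take t1 h2" using len(2) by (metis order_refl take_all)
      then show False using go(2)[OF 1] stop(1) same_deg by simp
    next
      case 2
      then have "take t2 h1 = take t2 h2" using prefix[OF less_imp_le order_refl] by blast
      then have "h2 = take t2 h1" using len(4) by (metis order_refl take_all)
      then show False using go(1)[OF 2] stop(2) same_deg by simp
    qed
  qed
  moreover have "take (Suc t1) ps1 = take (Suc t1) ps2 \<and> take t1 h1 = take t1 h2"
    using prefix[OF order_refl] calculation by simp
  ultimately show ?thesis using len by simp
qed

lemma Least_nth_eq:
  assumes "i0 < length ps" "ps ! i0 = y" "y \<notin> set (take i0 ps)"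
  shows "(LEAST i. ps ! i = y) = i0"
proof (rule Least_equality)
  show "ps ! i0 = y" by fact
  fix i assume "ps ! i = y"
  show "i0 \<le> i"
  proof (rule ccontr)
    assume "\<not> i0 \<le> i"
    then have "ps ! i \<in> set (take i0 ps)"
      using assms(1) by (auto simp: in_set_conv_nth intro!: exI[of _ i])
    then show False using \<open>ps ! i = y\<close> assms(3) by simp
  qed
qed

lemma Least_nth_first:
  assumes "y \<in> set ps"
  shows "(LEAST i. ps ! i = y) < length ps" and "ps ! (LEAST i. ps ! i = y) = y"
    and "y \<notin> set (take (LEAST i. ps ! i = y) ps)"
proof -
  obtain i where i: "i < length ps" "ps ! i = y" using assms by (auto simp: in_set_conv_nth)
  show "ps ! (LEAST i. ps ! i = y) = y" using LeastI[of "\<lambda>i. ps ! i = y"] i by blast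
  show "(LEAST i. ps ! i = y) < length ps" using Least_le[of "\<lambda>i. ps ! i = y"] i by fastforce
  show "y \<notin> set (take (LEAST i. ps ! i = y) ps)"
  proof
    assume "y \<in> set (take (LEAST i. ps ! i = y) ps)"
    then obtain j where "j < (LEAST i. ps ! i = y)" "ps ! j = y" by (auto simp: in_set_conv_nth)
    then show False using not_less_Least by blast
  qed
qed

lemma Least_nth_take_eq:
  assumes "y \<in> set (take k xs)" and "take k xs = take k ys"
  shows "(LEAST i. xs ! i = y) = (LEAST i. ys ! i = y)"
proof -
  define l where "l = (LEAST i. take k xs ! i = y)"
  note first = Least_nth_first[OF assms(1), folded l_def]
  have "(LEAST i. zs ! i = y) = l" if zs: "take k zs = take k xs" for zs
  proof (rule Least_nth_eq)
    have "l < length (take k zs)" using first(1) zs by simp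
    then have lk: "l < k" and lz: "l < length zs" by simp_all
    show "l < length zs" by (fact lz)
    show "zs ! l = y" using first(2) lk by (simp flip: zs)
    show "y \<notin> set (take l zs)" using first(3) lk by (simp flip: zs add: min_absorb1)
  qed
  from this[of xs] this[of ys] assms(2) show ?thesis by simp
qed

lemma card_set_take_Suc:
  assumes "k < length ps"
  shows "card (set (take (Suc k) ps)) = Suc (card {i. i < k \<and> ps ! Suc i \<notin> set (take (Suc i) ps)})"
  using assms
proof (induction k)
  case 0 then show ?case by (cases ps) auto
next
  case (Suc k)
  have t: "take (Suc (Suc k)) ps = take (Suc k) ps @ [ps ! Suc k]"
    using Suc.prems by (simp add: take_Suc_conv_app_nth)
  have e: "{i. i < Suc k \<and> ps ! Suc i \<notin> set (take (Suc i) ps)} =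
      {i. i < k \<and> ps ! Suc i \<notin> set (take (Suc i) ps)}
      \<union> (if ps ! Suc k \<notin> set (take (Suc k) ps) then {k} else {})"
    by (auto simp: less_Suc_eq)
  show ?case
    using Suc t e by (cases "ps ! Suc k \<in> set (take (Suc k) ps)") (simp_all add: insert_absorb)
qed

lemma pg_wf_deg_le:
  assumes "pg_wf G" shows "deg G u \<le> nv G"
proof (cases "u < nv G")
  case True
  have "inj_on (\<lambda>p. fst (port G u p)) {..<deg G u}" using assms True by (simp add: pg_wf_def)
  moreover have "(\<lambda>p. fst (port G u p)) ` {..<deg G u} \<subseteq> {..<nv G}"
    using assms True by (auto simp: pg_wf_def)
  ultimately have "card {..<deg G u} \<le> card {..<nv G}" by (intro card_inj_on_le) auto
  then show ?thesis by simp
qed (use assms in \<open>simp add: pg_wf_def\<close>)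

lemma pg_wf_port_bounded:
  assumes "pg_wf G" shows "port G u p \<in> {..<nv G} \<times> {..nv G}"
proof (cases "u < nv G \<and> p < deg G u")
  case True
  then have "fst (port G u p) < nv G" "snd (port G u p) < deg G (fst (port G u p))"
    using assms by (auto simp: pg_wf_def)
  then show ?thesis using pg_wf_deg_le[OF assms, of "fst (port G u p)"] by (simp add: mem_Times_iff)
next
  case False
  then show ?thesis using assms by (simp add: pg_wf_def)
qed

lemma pg_wf_deg_outside: "pg_wf G \<Longrightarrow> nv G \<le> u \<Longrightarrow> deg G u = 0"
  by (simp add: pg_wf_def)

lemma pg_wf_port_outside: "pg_wf G \<Longrightarrow> \<not> (u < nv G \<and> p < deg G u) \<Longrightarrow> port G u p = (0, 0)"
  by (simp add: pg_wf_def)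

lemma pg_wf_eqI:
  assumes wf: "pg_wf G1" "pg_wf G2" and nv: "nv G1 = nv G2"
    and deg: "\<And>u. u < nv G1 \<Longrightarrow> deg G1 u = deg G2 u"
    and port: "\<And>u p. u < nv G1 \<Longrightarrow> p < nv G1 \<Longrightarrow> port G1 u p = port G2 u p"
  shows "G1 = G2"
proof (rule pgraph.equality)
  show "deg G1 = deg G2"
  proof
    fix u show "deg G1 u = deg G2 u"
      using deg[of u] pg_wf_deg_outside[OF wf(1), of u] pg_wf_deg_outside[OF wf(2), of u] nv
      by (cases "u < nv G1") simp_all
  qed
  show "port G1 = port G2"
  proof (intro ext)
    fix u p
    show "port G1 u p = port G2 u p"
    proof (cases "u < nv G1 \<and> p < nv G1")
      case False
      then have "\<not> (u < nv G1 \<and> p < deg G1 u)" "\<not> (u < nv G2 \<and> p < deg G2 u)"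
        using pg_wf_deg_le[OF wf(1), of u] pg_wf_deg_le[OF wf(2), of u] nv by auto
      then show ?thesis using pg_wf_port_outside[OF wf(1)] pg_wf_port_outside[OF wf(2)] by simp
    qed (simp add: port)
  qed
qed (use nv in simp_all)

lemma finite_pg_wf: "finite {G. pg_wf G \<and> nv G = n}"
proof -
  let ?code = "\<lambda>G. (restrict (deg G) {..<n}, restrict (\<lambda>u. restrict (port G u) {..<n}) {..<n})"
  have "inj_on ?code {G. pg_wf G \<and> nv G = n}"
  proof (rule inj_onI)
    fix G1 G2 assume G: "G1 \<in> {G. pg_wf G \<and> nv G = n}" "G2 \<in> {G. pg_wf G \<and> nv G = n}"
      and code: "?code G1 = ?code G2"
    show "G1 = G2"
    proof (rule pg_wf_eqI)
      fix u p assume "u < nv G1"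
      then show "deg G1 u = deg G2 u" using G fun_cong[OF arg_cong[OF code, of fst], of u] by simp
      assume "p < nv G1"
      then show "port G1 u p = port G2 u p"
        using \<open>u < nv G1\<close> G fun_cong[OF fun_cong[OF arg_cong[OF code, of snd], of u], of p] by simp
    qed (use G in simp_all)
  qed
  moreover have "?code ` {G. pg_wf G \<and> nv G = n}
      \<subseteq> PiE {..<n} (\<lambda>_. {..n}) \<times> PiE {..<n} (\<lambda>_. PiE {..<n} (\<lambda>_. {..<n} \<times> {..n}))"
  proof (rule image_subsetI)
    fix G assume "G \<in> {G. pg_wf G \<and> nv G = n}"
    then show "?code G \<in> PiE {..<n} (\<lambda>_. {..n}) \<times> PiE {..<n} (\<lambda>_. PiE {..<n} (\<lambda>_. {..<n} \<times> {..n}))"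
      using pg_wf_deg_le[of G] pg_wf_port_bounded[of G] by auto
  qed
  moreover have "finite (PiE {..<n} (\<lambda>_. {..n}) \<times> PiE {..<n} (\<lambda>_. PiE {..<n} (\<lambda>_. {..<n} \<times> {..n})))"
    by (intro finite_cartesian_product finite_PiE) auto
  ultimately show ?thesis using inj_on_finite by blast
qed

lemma length_advice_le_Max:
  assumes "pg_wf G" "v < nv G"
  shows "length (f G v) \<le> Max {length (f G' v') | G' v'. pg_wf G' \<and> nv G' = nv G \<and> v' < nv G}"
proof (rule Max_ge)
  have "{length (f G' v') | G' v'. pg_wf G' \<and> nv G' = nv G \<and> v' < nv G}
      \<subseteq> (\<lambda>(G', v'). length (f G' v')) ` ({G'. pg_wf G' \<and> nv G' = nv G} \<times> {..<nv G})" by auto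
  then show "finite {length (f G' v') | G' v'. pg_wf G' \<and> nv G' = nv G \<and> v' < nv G}"
    by (rule finite_subset) (use finite_pg_wf in auto)
qed (use assms in auto)

section \<open>The hub-and-cycle family\<close>

locale hub_cycle =
  fixes m n :: nat
  assumes m3: "3 \<le> m" and mn: "2 * m + 3 \<le> n"
begin

text \<open>
  Nodes below \<open>m\<close> are hubs and \<open>Cyc = {m..<n}\<close> is the cycle; the hub port \<open>p\<close> leads to
  \<open>m + p\<close>. A cycle node \<open>y\<close> has neighbour slots \<open>c < m + 2\<close>: slot \<open>c < m\<close> is hub \<open>c\<close>, slot
  \<open>m\<close> the successor and slot \<open>m + 1\<close> the predecessor of \<open>y\<close>. A labeling \<open>\<pi>\<close> assigns to each
  cycle node \<open>y\<close> the bijection \<open>\<pi> y\<close> from its port numbers to its slots.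
\<close>

definition Cyc :: "nat set" where "Cyc = {m..<n}"

definition cnext :: "nat \<Rightarrow> nat" where "cnext y = (if y = n - 1 then m else Suc y)"

definition cprev :: "nat \<Rightarrow> nat" where "cprev y = (if y = m then n - 1 else y - 1)"

definition nbr :: "nat \<Rightarrow> nat \<Rightarrow> nat" where
  "nbr y c = (if c < m then c else if c = m then cnext y else cprev y)"

definition nbr_index :: "nat \<Rightarrow> nat \<Rightarrow> nat" where
  "nbr_index w u = (if u < m then u else if u = cprev w then Suc m else m)"

definition degree :: "nat \<Rightarrow> nat" where
  "degree u = (if u < m then n - m else if u < n then m + 2 else 0)"

definition lport :: "(nat \<Rightarrow> nat \<Rightarrow> nat) \<Rightarrow> nat \<Rightarrow> nat \<Rightarrow> nat \<times> nat" where
  "lport \<pi> u p = (if u < n \<and> p < degree u then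
      (if u < m then (m + p, inv (\<pi> (m + p)) u)
       else (let w = nbr u (\<pi> u p) in (w, if w < m then u - m else inv (\<pi> w) (nbr_index w u))))
    else (0, 0))"

definition pgraph_of :: "(nat \<Rightarrow> nat \<Rightarrow> nat) \<Rightarrow> pgraph" where
  "pgraph_of \<pi> = \<lparr>nv = n, deg = degree, port = lport \<pi>\<rparr>"

definition Labelings :: "(nat \<Rightarrow> nat \<Rightarrow> nat) set" where
  "Labelings = {\<pi>. \<forall>y. (y \<in> Cyc \<longrightarrow> \<pi> y permutes {..<m+2}) \<and> (y \<notin> Cyc \<longrightarrow> \<pi> y = id)}"

lemma Cyc_iff: "y \<in> Cyc \<longleftrightarrow> m \<le> y \<and> y < n" by (auto simp: Cyc_def)

lemma cnext_in_Cyc: "y \<in> Cyc \<Longrightarrow> cnext y \<in> Cyc" using mn by (auto simp: Cyc_iff cnext_def)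
lemma cprev_in_Cyc: "y \<in> Cyc \<Longrightarrow> cprev y \<in> Cyc" using mn by (auto simp: Cyc_iff cprev_def)
lemma cnext_neq: "y \<in> Cyc \<Longrightarrow> cnext y \<noteq> y" using mn by (auto simp: Cyc_iff cnext_def)
lemma cprev_neq: "y \<in> Cyc \<Longrightarrow> cprev y \<noteq> y" using mn by (auto simp: Cyc_iff cprev_def)
lemma cnext_neq_cprev: "y \<in> Cyc \<Longrightarrow> cnext y \<noteq> cprev y"
  using mn by (auto simp: Cyc_iff cnext_def cprev_def)
lemma cprev_cnext: "y \<in> Cyc \<Longrightarrow> cprev (cnext y) = y"
  using mn by (auto simp: Cyc_iff cnext_def cprev_def)
lemma cnext_cprev: "y \<in> Cyc \<Longrightarrow> cnext (cprev y) = y"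
  using mn by (auto simp: Cyc_iff cnext_def cprev_def)

lemma nbr_less: "y \<in> Cyc \<Longrightarrow> c < m + 2 \<Longrightarrow> nbr y c < n"
  using cnext_in_Cyc cprev_in_Cyc mn by (auto simp: nbr_def Cyc_iff)
lemma nbr_neq: "y \<in> Cyc \<Longrightarrow> c < m + 2 \<Longrightarrow> nbr y c \<noteq> y"
  using cnext_neq cprev_neq by (auto simp: nbr_def Cyc_iff)
lemma nbr_in_Cyc_iff: "y \<in> Cyc \<Longrightarrow> c < m + 2 \<Longrightarrow> nbr y c \<in> Cyc \<longleftrightarrow> m \<le> c"
  using cnext_in_Cyc cprev_in_Cyc by (auto simp: nbr_def Cyc_iff)
lemma nbr_hub: "c < m \<Longrightarrow> nbr y c = c" by (simp add: nbr_def)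

lemma inj_on_nbr:
  assumes "y \<in> Cyc" shows "inj_on (nbr y) {..<m+2}"
proof -
  have "m \<le> cnext y" "m \<le> cprev y" "cnext y \<noteq> cprev y"
    using cnext_neq_cprev[OF assms] cnext_in_Cyc[OF assms] cprev_in_Cyc[OF assms]
      by (auto simp: Cyc_iff)
  then show ?thesis by (auto simp: inj_on_def nbr_def split: if_splits)
qed

lemma nbr_index_less: "u < n \<Longrightarrow> nbr_index w u < m + 2" by (simp add: nbr_index_def)
lemma nbr_nbr_index_cnext: "w \<in> Cyc \<Longrightarrow> nbr w (nbr_index w (cnext w)) = cnext w"
  using cnext_neq_cprev cnext_in_Cyc by (auto simp: nbr_index_def nbr_def Cyc_iff)
lemma nbr_nbr_index_cprev: "w \<in> Cyc \<Longrightarrow> nbr w (nbr_index w (cprev w)) = cprev w"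
  using cprev_in_Cyc by (auto simp: nbr_index_def nbr_def Cyc_iff)

lemma Labelings_permutes: "\<pi> \<in> Labelings \<Longrightarrow> y \<in> Cyc \<Longrightarrow> \<pi> y permutes {..<m+2}"
  by (simp add: Labelings_def)
lemma Labelings_less: "\<pi> \<in> Labelings \<Longrightarrow> y \<in> Cyc \<Longrightarrow> c < m + 2 \<Longrightarrow> \<pi> y c < m + 2"
  using Labelings_permutes permutes_in_image by fastforce
lemma Labelings_inv_less: "\<pi> \<in> Labelings \<Longrightarrow> y \<in> Cyc \<Longrightarrow> c < m + 2 \<Longrightarrow> inv (\<pi> y) c < m + 2"
  using Labelings_permutes permutes_in_image permutes_inv by fastforce
lemma Labelings_apply_inv: "\<pi> \<in> Labelings \<Longrightarrow> y \<in> Cyc \<Longrightarrow> \<pi> y (inv (\<pi> y) c) = c"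
  using Labelings_permutes permutes_inverses(1) by fastforce
lemma Labelings_inv_apply: "\<pi> \<in> Labelings \<Longrightarrow> y \<in> Cyc \<Longrightarrow> inv (\<pi> y) (\<pi> y c) = c"
  using Labelings_permutes permutes_inverses(2) by fastforce

lemma lport_hub: "u < m \<Longrightarrow> p < n - m \<Longrightarrow> lport \<pi> u p = (m + p, inv (\<pi> (m + p)) u)"
  using mn by (simp add: lport_def degree_def)
lemma lport_Cyc: "u \<in> Cyc \<Longrightarrow> p < m + 2 \<Longrightarrow> lport \<pi> u p =
   (nbr u (\<pi> u p),
    if nbr u (\<pi> u p) < m then u - m else inv (\<pi> (nbr u (\<pi> u p))) (nbr_index (nbr u (\<pi> u p)) u))"
  by (simp add: lport_def degree_def Cyc_iff Let_def)
lemma lport_outside: "\<not> (u < n \<and> p < degree u) \<Longrightarrow> lport \<pi> u p = (0, 0)"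
  unfolding lport_def by presburger

lemma degree_Cyc: "u \<in> Cyc \<Longrightarrow> degree u = m + 2" by (simp add: degree_def Cyc_iff)
lemma degree_hub: "u < m \<Longrightarrow> degree u = n - m" by (simp add: degree_def)

lemma lport_valid:
  assumes lab: "\<pi> \<in> Labelings" and u: "u < n" and p: "p < degree u"
  shows "fst (lport \<pi> u p) < n \<and> fst (lport \<pi> u p) \<noteq> u
     \<and> snd (lport \<pi> u p) < degree (fst (lport \<pi> u p))
     \<and> lport \<pi> (fst (lport \<pi> u p)) (snd (lport \<pi> u p)) = (u, p)"
proof (cases "u < m")
  case True
  then have p': "p < n - m" using p by (simp add: degree_def)
  have w: "m + p \<in> Cyc" using p' by (simp add: Cyc_iff)
  have q: "inv (\<pi> (m + p)) u < m + 2" using Labelings_inv_less[OF lab w] True by simp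
  have "\<pi> (m + p) (inv (\<pi> (m + p)) u) = u" using Labelings_apply_inv[OF lab w] .
  then have "lport \<pi> (m + p) (inv (\<pi> (m + p)) u) = (u, p)"
    using lport_Cyc[OF w q] True by (simp add: nbr_hub)
  then show ?thesis using lport_hub[OF True p'] True w q degree_Cyc[OF w] by (simp add: Cyc_iff)
next
  case False
  then have uY: "u \<in> Cyc" using u by (simp add: Cyc_iff)
  then have p': "p < m + 2" using p degree_Cyc by simp
  have c: "\<pi> u p < m + 2" using Labelings_less[OF lab uY p'] .
  show ?thesis
  proof (cases "\<pi> u p < m")
    case True
    have e: "lport \<pi> u p = (\<pi> u p, u - m)" using lport_Cyc[OF uY p'] True by (simp add: nbr_hub)
    have q: "u - m < n - m" using uY unfolding Cyc_iff by arith
    have "lport \<pi> (\<pi> u p) (u - m) = (u, p)"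
      using lport_hub[OF True q] uY Labelings_inv_apply[OF lab uY] by (simp add: Cyc_iff)
    then show ?thesis using e True q degree_hub[OF True] False mn by simp
  next
    case False2: False
    define w where "w = nbr u (\<pi> u p)"
    have wY: "w \<in> Cyc" using nbr_in_Cyc_iff[OF uY c] False2 by (simp add: w_def)
    have wsp: "w = cnext u \<or> w = cprev u" using False2 by (auto simp: w_def nbr_def)
    have e: "lport \<pi> u p = (w, inv (\<pi> w) (nbr_index w u))"
      using lport_Cyc[OF uY p'] wY by (simp add: w_def Cyc_iff)
    have sl: "nbr_index w u < m + 2" using u nbr_index_less by simp
    have q: "inv (\<pi> w) (nbr_index w u) < m + 2" using Labelings_inv_less[OF lab wY sl] .
    have nbs: "nbr w (nbr_index w u) = u"
      using wsp nbr_nbr_index_cnext[OF wY] nbr_nbr_index_cprev[OF wY]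
        cprev_cnext[OF uY] cnext_cprev[OF uY]
      by auto
    have su: "nbr_index u w = \<pi> u p"
      using wsp False2 c cnext_neq_cprev[OF uY] cnext_in_Cyc[OF uY] cprev_in_Cyc[OF uY]
      by (auto simp: nbr_index_def w_def nbr_def Cyc_iff split: if_splits)
    have "lport \<pi> w (inv (\<pi> w) (nbr_index w u)) = (u, p)"
      using lport_Cyc[OF wY q] Labelings_apply_inv[OF lab wY] nbs uY su
        Labelings_inv_apply[OF lab uY]
      by (simp add: Cyc_iff)
    then show ?thesis using e wY q nbr_neq[OF uY c] degree_Cyc[OF wY] by (simp add: Cyc_iff w_def)
  qed
qed

lemma inj_on_lport:
  assumes lab: "\<pi> \<in> Labelings" and u: "u < n"
  shows "inj_on (\<lambda>p. fst (lport \<pi> u p)) {..<degree u}"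
proof (cases "u < m")
  case True
  then show ?thesis by (auto simp: inj_on_def lport_hub degree_hub)
next
  case False
  then have uY: "u \<in> Cyc" using u by (simp add: Cyc_iff)
  show ?thesis
  proof (rule inj_onI)
    fix p q assume p: "p \<in> {..<degree u}" and q: "q \<in> {..<degree u}"
      and e: "fst (lport \<pi> u p) = fst (lport \<pi> u q)"
    have p': "p < m + 2" and q': "q < m + 2" using p q degree_Cyc[OF uY] by auto
    have "nbr u (\<pi> u p) = nbr u (\<pi> u q)" using e lport_Cyc[OF uY p'] lport_Cyc[OF uY q'] by simp
    then have "\<pi> u p = \<pi> u q"
      using inj_on_nbr[OF uY] Labelings_less[OF lab uY p'] Labelings_less[OF lab uY q']
      by (auto simp: inj_on_def)
    then show "p = q" using Labelings_inv_apply[OF lab uY] by metis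
  qed
qed

lemma pgraph_of_simps [simp]:
  "nv (pgraph_of \<pi>) = n" "deg (pgraph_of \<pi>) = degree" "port (pgraph_of \<pi>) = lport \<pi>"
  by (simp_all add: pgraph_of_def)

lemma adj_hub_Cyc: "u < m \<Longrightarrow> w \<in> Cyc \<Longrightarrow> (u, w) \<in> adj (pgraph_of \<pi>)"
  unfolding adj_def pgraph_of_def
  using mn by (auto simp: Cyc_iff degree_hub lport_hub intro!: exI[of _ "w - m"])

lemma adj_Cyc_nbr:
  assumes lab: "\<pi> \<in> Labelings" and u: "u \<in> Cyc" and c: "c < m + 2"
  shows "(u, nbr u c) \<in> adj (pgraph_of \<pi>)"
proof -
  have q: "inv (\<pi> u) c < m + 2" using Labelings_inv_less[OF lab u c] .
  have "fst (lport \<pi> u (inv (\<pi> u) c)) = nbr u c"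
    using lport_Cyc[OF u q] Labelings_apply_inv[OF lab u] by simp
  then show ?thesis using q u unfolding adj_def pgraph_of_def by (auto simp: degree_Cyc Cyc_iff)
qed

lemma adj_Cyc_hub: "\<pi> \<in> Labelings \<Longrightarrow> u \<in> Cyc \<Longrightarrow> h < m \<Longrightarrow> (u, h) \<in> adj (pgraph_of \<pi>)"
  using adj_Cyc_nbr[of \<pi> u h] by (simp add: nbr_hub)
lemma adj_Cyc_cnext: "\<pi> \<in> Labelings \<Longrightarrow> u \<in> Cyc \<Longrightarrow> (u, cnext u) \<in> adj (pgraph_of \<pi>)"
  using adj_Cyc_nbr[of \<pi> u m] by (simp add: nbr_def)

lemma pg_wf_pgraph_of: "\<pi> \<in> Labelings \<Longrightarrow> pg_wf (pgraph_of \<pi>)"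
proof -
  assume lab: "\<pi> \<in> Labelings"
  have mY: "m \<in> Cyc" using mn by (simp add: Cyc_iff)
  have to0: "(u, 0) \<in> (adj (pgraph_of \<pi>))\<^sup>*" if "u < n" for u
  proof (cases "u < m")
    case True
    then have "(u, m) \<in> adj (pgraph_of \<pi>)" using adj_hub_Cyc mY by simp
    moreover have "(m, 0) \<in> adj (pgraph_of \<pi>)" using adj_Cyc_hub[OF lab mY] m3 by simp
    ultimately show ?thesis by (meson converse_rtrancl_into_rtrancl r_into_rtrancl)
  next
    case False
    then have "u \<in> Cyc" using that by (simp add: Cyc_iff)
    then show ?thesis using adj_Cyc_hub[OF lab] m3 by auto
  qed
  have from0: "(0, w) \<in> (adj (pgraph_of \<pi>))\<^sup>*" if "w < n" for w
  proof (cases "w < m")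
    case True
    have "(0, m) \<in> adj (pgraph_of \<pi>)" using adj_hub_Cyc mY m3 by simp
    moreover have "(m, w) \<in> adj (pgraph_of \<pi>)" using adj_Cyc_hub[OF lab mY True] .
    ultimately show ?thesis by (meson converse_rtrancl_into_rtrancl r_into_rtrancl)
  next
    case False
    then have "w \<in> Cyc" using that by (simp add: Cyc_iff)
    then show ?thesis using adj_hub_Cyc m3 by auto
  qed
  have conn: "\<forall>u < n. \<forall>w < n. (u, w) \<in> (adj (pgraph_of \<pi>))\<^sup>*"
    using to0 from0 by (meson rtrancl_trans)
  have g: "nv (pgraph_of \<pi>) = n" "deg (pgraph_of \<pi>) = degree" "port (pgraph_of \<pi>) = lport \<pi>"
    by (simp_all add: pgraph_of_def)
  show ?thesis
    unfolding pg_wf_def g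
    using lport_valid[OF lab] inj_on_lport[OF lab] conn mn
    by (auto simp: degree_def lport_outside)
qed

text \<open>The hamiltonian cycle \<open>0, m, 1, m + 1, \<dots>, m - 1, 2m - 1, 2m, 2m + 1, \<dots>, n - 1\<close>.\<close>
definition ham_order :: "nat \<Rightarrow> nat" where
  "ham_order i = (if i < 2 * m then (if even i then i div 2 else m + i div 2) else i)"

lemma inj_on_ham_order: "inj_on ham_order {..<n}"
proof (rule inj_onI)
  fix i j assume "i \<in> {..<n}" "j \<in> {..<n}" "ham_order i = ham_order j"
  then show "i = j" unfolding ham_order_def by (auto split: if_splits elim!: evenE oddE)
qed

lemma ham_order_image: "ham_order ` {..<n} = {..<n}"
proof
  show "ham_order ` {..<n} \<subseteq> {..<n}" using mn by (auto simp: ham_order_def)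
  show "{..<n} \<subseteq> ham_order ` {..<n}"
  proof
    fix x assume x: "x \<in> {..<n}"
    consider "x < m" | "m \<le> x" "x < 2 * m" | "2 * m \<le> x" by linarith
    then have "\<exists>i<n. ham_order i = x"
    proof cases
      case 1 then show ?thesis using mn by (intro exI[of _ "2 * x"]) (auto simp: ham_order_def)
    next
      case 2 then show ?thesis
        using mn by (intro exI[of _ "2 * (x - m) + 1"]) (auto simp: ham_order_def)
    next
      case 3 then show ?thesis using x by (intro exI[of _ x]) (auto simp: ham_order_def)
    qed
    then show "x \<in> ham_order ` {..<n}" by auto
  qed
qed

lemma adj_ham_order:
  assumes lab: "\<pi> \<in> Labelings" and i: "i < n"
  shows "(ham_order i, ham_order (Suc i mod n)) \<in> adj (pgraph_of \<pi>)"
proof -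
  consider "i + 1 < 2 * m" "even i" | "i + 1 < 2 * m" "odd i" | "i + 1 = 2 * m"
    | "2 * m \<le> i" "i + 1 < n" | "i + 1 = n" using i by linarith
  then show ?thesis
  proof cases
    case 1
    then have "ham_order i = i div 2" "ham_order (Suc i mod n) = m + i div 2"
      using i mn by (auto simp: ham_order_def)
    moreover have "m + i div 2 \<in> Cyc" using 1 mn by (auto simp: Cyc_iff)
    ultimately show ?thesis using adj_hub_Cyc 1 by auto
  next
    case 2
    then have "ham_order i = m + i div 2" "ham_order (Suc i mod n) = (i + 1) div 2"
      using i mn by (auto simp: ham_order_def)
    moreover have "m + i div 2 \<in> Cyc" using 2 mn by (auto simp: Cyc_iff)
    moreover have "(i + 1) div 2 < m" using 2 by (auto elim!: oddE)
    ultimately show ?thesis using adj_Cyc_hub[OF lab] by metis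
  next
    case 3
    then have "odd i" by presburger
    then have "i div 2 = m - 1" using 3 by (auto elim!: oddE)
    then have "ham_order i = 2 * m - 1" "ham_order (Suc i mod n) = 2 * m"
      using i mn m3 3 \<open>odd i\<close> by (auto simp: ham_order_def)
    moreover have "2 * m - 1 \<in> Cyc" "cnext (2 * m - 1) = 2 * m"
      using mn m3 by (auto simp: Cyc_iff cnext_def)
    ultimately show ?thesis using adj_Cyc_cnext[OF lab] by metis
  next
    case 4
    then have "ham_order i = i" "ham_order (Suc i mod n) = i + 1"
      using mn by (auto simp: ham_order_def)
    moreover have "i \<in> Cyc" "cnext i = i + 1" using 4 mn by (auto simp: Cyc_iff cnext_def)
    ultimately show ?thesis using adj_Cyc_cnext[OF lab] by metis
  next
    case 5
    then have "ham_order i = n - 1" "ham_order (Suc i mod n) = 0"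
      using mn by (auto simp: ham_order_def)
    moreover have "n - 1 \<in> Cyc" using mn by (auto simp: Cyc_iff)
    ultimately show ?thesis using adj_Cyc_hub[OF lab] m3 by fastforce
  qed
qed

lemma hamiltonian_pgraph_of:
  assumes "\<pi> \<in> Labelings" shows "hamiltonian (pgraph_of \<pi>)"
  unfolding hamiltonian_def
proof (intro exI conjI allI impI)
  let ?xs = "map ham_order [0..<n]"
  show "distinct ?xs" using inj_on_ham_order by (simp add: distinct_map atLeast0LessThan)
  show "set ?xs = {..<nv (pgraph_of \<pi>)}" using ham_order_image by (simp add: atLeast0LessThan)
  show "3 \<le> length ?xs" using mn m3 by simp
  fix i assume "i < length ?xs"
  then show "(?xs ! i, ?xs ! ((i + 1) mod length ?xs)) \<in> adj (pgraph_of \<pi>)"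
    using adj_ham_order[OF assms, of i] mn by simp
qed

lemma finite_Labelings: "finite Labelings"
proof -
  have "inj_on (\<lambda>\<pi>. restrict \<pi> Cyc) Labelings"
  proof (rule inj_onI)
    fix \<pi>1 \<pi>2 assume a: "\<pi>1 \<in> Labelings" "\<pi>2 \<in> Labelings" "restrict \<pi>1 Cyc = restrict \<pi>2 Cyc"
    show "\<pi>1 = \<pi>2"
    proof
      fix y show "\<pi>1 y = \<pi>2 y"
      proof (cases "y \<in> Cyc")
        case True then show ?thesis using a(3) by (metis restrict_apply')
      next
        case False then show ?thesis using a(1,2) by (simp add: Labelings_def)
      qed
    qed
  qed
  moreover have "(\<lambda>\<pi>. restrict \<pi> Cyc) ` Labelings \<subseteq> PiE Cyc (\<lambda>_. {p. p permutes {..<m+2}})"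
    by (auto simp: Labelings_def)
  moreover have "finite (PiE Cyc (\<lambda>_. {p. p permutes {..<m+2}}))"
    by (intro finite_PiE) (auto simp: Cyc_def finite_permutations)
  ultimately show ?thesis using inj_on_finite by blast
qed

lemma id_in_Labelings: "(\<lambda>_. id) \<in> Labelings" by (simp add: Labelings_def permutes_id)

end

section \<open>Forward nodes of an exploring run\<close>

context hub_cycle
begin

definition forward_nodes :: "nat \<Rightarrow> nat list \<Rightarrow> nat set" where
  "forward_nodes t ps = {y \<in> Cyc. \<exists>i < t. ps ! i = y \<and> y \<notin> set (take i ps)
      \<and> ps ! Suc i \<in> Cyc \<and> ps ! Suc i \<notin> set (take (Suc i) ps)}"

definition first_visit :: "nat list \<Rightarrow> nat \<Rightarrow> nat" where
  "first_visit ps y = (LEAST i. ps ! i = y)"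

definition exit_port :: "nat list \<Rightarrow> hist \<Rightarrow> nat \<Rightarrow> nat" where
  "exit_port ps h y = fst (h ! first_visit ps y)"

definition entry_port :: "nat list \<Rightarrow> hist \<Rightarrow> nat \<Rightarrow> nat" where
  "entry_port ps h y = fst (snd (h ! (first_visit ps y - 1)))"

definition spare_ports :: "(nat \<Rightarrow> nat \<Rightarrow> nat) \<Rightarrow> nat list \<Rightarrow> hist \<Rightarrow> nat \<Rightarrow> nat set" where
  "spare_ports \<pi> ps h y = {c. c < m + 2 \<and> c \<noteq> entry_port ps h y \<and> c \<noteq> exit_port ps h y \<and> \<pi> y c < m}"

end

locale hub_cycle_run = hub_cycle +
  fixes A :: alg and a :: "bool list" and t :: nat and ps :: "nat list" and h :: hist
    and \<pi> :: "nat \<Rightarrow> nat \<Rightarrow> nat"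
  assumes lab: "\<pi> \<in> Labelings" and run: "is_run (pgraph_of \<pi>) A a 0 t ps h"
    and visits_all: "set ps = {..<n}"
begin

lemma run_lengths: "length ps = Suc t" "length h = t" "ps ! 0 = 0"
  using run by (auto simp: is_run_def)

lemma run_step: "j < t \<Longrightarrow> fst (h ! j) < degree (ps ! j)
   \<and> ps ! Suc j = fst (lport \<pi> (ps ! j) (fst (h ! j)))
   \<and> snd (h ! j) = (snd (lport \<pi> (ps ! j) (fst (h ! j))), degree (ps ! Suc j))"
  using run by (auto simp: is_run_def)

lemma run_pos_less: "i < Suc t \<Longrightarrow> ps ! i < n"
  using visits_all run_lengths by (metis lessThan_iff nth_mem)

abbreviation "Fwd \<equiv> forward_nodes t ps"
abbreviation "visit \<equiv> first_visit ps"
abbreviation "exit \<equiv> exit_port ps h"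
abbreviation "entry \<equiv> entry_port ps h"
abbreviation "spare \<equiv> spare_ports \<pi> ps h"

lemma Fwd_subset: "Fwd \<subseteq> Cyc" by (auto simp: forward_nodes_def)

lemma Fwd_first_visit:
  assumes "y \<in> Fwd"
  shows "visit y < t \<and> ps ! visit y = y \<and> y \<notin> set (take (visit y) ps) \<and> ps ! Suc (visit y) \<in> Cyc
     \<and> ps ! Suc (visit y) \<notin> set (take (Suc (visit y)) ps) \<and> 0 < visit y"
proof -
  obtain i where i: "i < t" "ps ! i = y" "y \<notin> set (take i ps)"
    "ps ! Suc i \<in> Cyc" "ps ! Suc i \<notin> set (take (Suc i) ps)"
    using assms by (auto simp: forward_nodes_def)
  have "visit y = i" unfolding first_visit_def using Least_nth_eq[of i ps y] i run_lengths by simp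
  moreover have "0 < i" using i run_lengths assms Fwd_subset m3 by (cases i) (auto simp: Cyc_iff)
  ultimately show ?thesis using i by simp
qed

lemma arrival_port:
  assumes u: "u < n" and p: "p < degree u" and y: "fst (lport \<pi> u p) = y" and yY: "y \<in> Cyc"
  shows "snd (lport \<pi> u p) = inv (\<pi> y) (nbr_index y u) \<and> nbr y (nbr_index y u) = u"
proof -
  have s: "snd (lport \<pi> u p) = inv (\<pi> y) (nbr_index y u)"
  proof (cases "u < m")
    case True
    then show ?thesis using y lport_hub[OF True] p degree_hub[OF True] by (simp add: nbr_index_def)
  next
    case False
    then have uY: "u \<in> Cyc" using u by (simp add: Cyc_iff)
    then show ?thesis using y yY lport_Cyc[OF uY] p degree_Cyc[OF uY] by (auto simp: Cyc_iff)
  qed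
  have v: "lport \<pi> y (snd (lport \<pi> u p)) = (u, p)" using lport_valid[OF lab u p] y by simp
  have q: "snd (lport \<pi> u p) < m + 2" using lport_valid[OF lab u p] y degree_Cyc[OF yY] by simp
  have "fst (lport \<pi> y (snd (lport \<pi> u p))) = nbr y (nbr_index y u)"
    using lport_Cyc[OF yY q] s Labelings_apply_inv[OF lab yY] by simp
  then show ?thesis using v s by simp
qed

lemma Fwd_ports:
  assumes yS: "y \<in> Fwd"
  shows "exit y < m + 2 \<and> m \<le> \<pi> y (exit y) \<and> \<pi> y (exit y) < m + 2
    \<and> nbr y (\<pi> y (exit y)) = ps ! Suc (visit y)
    \<and> entry y < m + 2 \<and> \<pi> y (entry y) = nbr_index y (ps ! (visit y - 1)) \<and> exit y \<noteq> entry y"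
proof -
  note ix = Fwd_first_visit[OF yS]
  have yY: "y \<in> Cyc" using yS Fwd_subset by auto
  define i where "i = visit y"
  have st: "fst (h ! i) < degree y \<and> ps ! Suc i = fst (lport \<pi> y (fst (h ! i)))"
    using run_step[of i] ix by (simp add: i_def)
  have pp: "exit y < m + 2" using st degree_Cyc[OF yY] by (simp add: exit_port_def i_def)
  have nbp: "nbr y (\<pi> y (exit y)) = ps ! Suc i"
    using st lport_Cyc[OF yY pp] by (simp add: exit_port_def i_def)
  have c: "\<pi> y (exit y) < m + 2" using Labelings_less[OF lab yY pp] .
  have cm: "m \<le> \<pi> y (exit y)" using nbr_in_Cyc_iff[OF yY c] nbp ix by (simp add: i_def)
  define u where "u = ps ! (i - 1)"
  have i1: "i - 1 < t" "Suc (i - 1) = i" using ix by (auto simp: i_def)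
  have st2: "fst (h ! (i - 1)) < degree u \<and> y = fst (lport \<pi> u (fst (h ! (i - 1))))
      \<and> snd (h ! (i - 1)) = (snd (lport \<pi> u (fst (h ! (i - 1)))), degree y)"
    using run_step[of "i - 1"] i1 ix by (simp add: u_def i_def)
  have un: "u < n" using run_pos_less i1 by (simp add: u_def)
  have fy: "fst (lport \<pi> u (fst (h ! (i - 1)))) = y" using st2 by simp
  have ap: "snd (lport \<pi> u (fst (h ! (i - 1)))) = inv (\<pi> y) (nbr_index y u)
      \<and> nbr y (nbr_index y u) = u"
    using arrival_port[OF un _ fy yY] st2 by blast
  have aa: "entry y = inv (\<pi> y) (nbr_index y u)" using st2 ap by (simp add: entry_port_def i_def)
  have aal: "entry y < m + 2" using aa Labelings_inv_less[OF lab yY] nbr_index_less[OF un] by simp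
  have pa: "\<pi> y (entry y) = nbr_index y u" using aa Labelings_apply_inv[OF lab yY] by simp
  have "exit y \<noteq> entry y"
  proof
    assume "exit y = entry y"
    then have "ps ! Suc i = u" using nbp pa ap by simp
    moreover have "u \<in> set (take (Suc i) ps)" using i1 run_lengths unfolding u_def
      by (auto simp: in_set_conv_nth intro!: exI[of _ "i - 1"])
    ultimately show False using ix by (simp add: i_def)
  qed
  then show ?thesis using pp cm c nbp aal pa by (simp add: i_def u_def)
qed

lemma card_spare: assumes yS: "y \<in> Fwd" shows "m - 2 \<le> card (spare y)"
proof -
  have yY: "y \<in> Cyc" using yS Fwd_subset by auto
  define B where "B = {c. c < m + 2 \<and> \<pi> y c < m}"
  have "B = inv (\<pi> y) ` {..<m}"
  proof
    show "B \<subseteq> inv (\<pi> y) ` {..<m}"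
    proof
      fix c assume "c \<in> B"
      then show "c \<in> inv (\<pi> y) ` {..<m}"
        using Labelings_inv_apply[OF lab yY, of c]
        by (auto simp: B_def intro!: image_eqI[of _ _ "\<pi> y c"])
    qed
    show "inv (\<pi> y) ` {..<m} \<subseteq> B"
      using Labelings_inv_less[OF lab yY] Labelings_apply_inv[OF lab yY] by (auto simp: B_def)
  qed
  moreover have "inj (inv (\<pi> y))"
    using Labelings_permutes[OF lab yY] by (meson permutes_inv permutes_inj)
  ultimately have cB: "card B = m" by (simp add: card_image inj_on_subset)
  have "spare y = B - {entry y, exit y}" by (auto simp: spare_ports_def B_def)
  moreover have "card B - card {entry y, exit y} \<le> card (B - {entry y, exit y})"
    by (rule diff_card_le_card_Diff) simp
  moreover have "card {entry y, exit y} \<le> 2" by (simp add: card_insert_le_m1)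
  ultimately show ?thesis using cB by (metis diff_le_mono2 order_trans)
qed

lemma first_visit_less:
  assumes "y \<in> set ps"
  shows "visit y < Suc t" and "ps ! visit y = y" and "y \<notin> set (take (visit y) ps)"
  using Least_nth_first[OF assms] run_lengths by (simp_all add: first_visit_def)

lemma inj_on_first_visit: "inj_on visit (set ps)"
proof (rule inj_onI)
  fix x y assume "x \<in> set ps" "y \<in> set ps" "visit x = visit y"
  then show "x = y" using first_visit_less(2) by metis
qed

definition revisit_steps :: "nat set" where
  "revisit_steps = {i. i < t \<and> ps ! Suc i \<in> set (take (Suc i) ps)}"

definition new_hub_steps :: "nat set" where
  "new_hub_steps = {i. i < t \<and> ps ! Suc i < m \<and> ps ! Suc i \<notin> set (take (Suc i) ps)}"

lemma card_revisit_steps: "card revisit_steps + (n - 1) = t"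
proof -
  define N where "N = {i. i < t \<and> ps ! Suc i \<notin> set (take (Suc i) ps)}"
  have "Suc (card N) = n"
    using card_set_take_Suc[of t ps] run_lengths visits_all by (simp add: N_def)
  moreover have "revisit_steps \<union> N = {..<t}" "revisit_steps \<inter> N = {}"
    by (auto simp: revisit_steps_def N_def)
  moreover have "finite revisit_steps" "finite N" by (auto simp: revisit_steps_def N_def)
  ultimately show ?thesis using card_Un_disjoint[of revisit_steps N] by simp
qed

lemma card_new_hub_steps: "card new_hub_steps \<le> m"
proof -
  have "inj_on (\<lambda>i. ps ! Suc i) new_hub_steps"
  proof (rule inj_onI)
    fix i j assume i: "i \<in> new_hub_steps" and j: "j \<in> new_hub_steps"
      and e: "ps ! Suc i = ps ! Suc j"
    have earlier: "ps ! Suc i \<in> set (take (Suc j) ps)" if "i < j" "j \<in> new_hub_steps" for i j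
      using that run_lengths
        by (auto simp: new_hub_steps_def in_set_conv_nth intro!: exI[of _ "Suc i"])
    show "i = j"
    proof (rule ccontr)
      assume "i \<noteq> j"
      then consider "i < j" | "j < i" by linarith
      then show False
      proof cases
        case 1 then show False using earlier[OF 1 j] e j by (simp add: new_hub_steps_def)
      next
        case 2 then show False using earlier[OF 2 i] e i by (simp add: new_hub_steps_def)
      qed
    qed
  qed
  moreover have "(\<lambda>i. ps ! Suc i) ` new_hub_steps \<subseteq> {..<m}" by (auto simp: new_hub_steps_def)
  ultimately show ?thesis using card_inj_on_le[of _ new_hub_steps "{..<m}"] by fastforce
qed

lemma first_visit_step_not_forward:
  assumes y: "y \<in> Cyc - Fwd - {ps ! t}"
  shows "visit y \<in> revisit_steps \<union> new_hub_steps"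
proof -
  have "y \<in> set ps" using y visits_all by (auto simp: Cyc_iff)
  note fv = first_visit_less[OF this]
  have "visit y \<noteq> t" using y fv(2) by auto
  then have i: "visit y < t" using fv(1) by simp
  have "ps ! Suc (visit y) < n" using run_pos_less i by simp
  moreover have "\<not> (ps ! Suc (visit y) \<in> Cyc \<and> ps ! Suc (visit y) \<notin> set (take (Suc (visit y)) ps))"
    using y i fv by (auto simp: forward_nodes_def)
  ultimately show ?thesis using i by (auto simp: revisit_steps_def new_hub_steps_def Cyc_iff)
qed

lemma card_Fwd: "2 * n - 2 * m - 2 - t \<le> card Fwd"
proof -
  have fin: "finite revisit_steps" "finite new_hub_steps"
    by (auto simp: revisit_steps_def new_hub_steps_def)
  have "card (Cyc - Fwd - {ps ! t}) \<le> card (revisit_steps \<union> new_hub_steps)"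
  proof (rule card_inj_on_le)
    show "inj_on visit (Cyc - Fwd - {ps ! t})"
      by (rule inj_on_subset[OF inj_on_first_visit]) (auto simp: visits_all Cyc_iff)
  qed (use first_visit_step_not_forward fin in auto)
  also have "\<dots> \<le> card revisit_steps + card new_hub_steps" by (rule card_Un_le)
  finally have "card (Cyc - Fwd) \<le> card revisit_steps + m + 1"
    using card_new_hub_steps by (simp add: card_Diff_singleton_if split: if_splits)
  moreover have "card (Cyc - Fwd) = n - m - card Fwd"
    using Fwd_subset by (simp add: card_Diff_subset finite_subset Cyc_def)
  ultimately show ?thesis using card_revisit_steps mn by linarith
qed

end

section \<open>Encoding labelings together with swaps\<close>

lemma transpose_swap_cancel:
  assumes swap: "f1 \<circ> transpose p q1 = f2 \<circ> transpose p q2" and "f1 p = f2 p" and "inj f1"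
  shows "q1 = q2 \<and> f1 = f2"
proof -
  have "f1 (transpose p q1 q2) = f1 (transpose p q1 q1)"
    using fun_cong[OF swap, of q2] \<open>f1 p = f2 p\<close> by simp
  with \<open>inj f1\<close> have "transpose p q1 q2 = transpose p q1 q1" by (rule injD)
  then have q: "q1 = q2" by (simp add: transpose_def split: if_splits)
  have "f1 = f2"
  proof
    fix x
    show "f1 x = f2 x" using fun_cong[OF swap, of "transpose p q1 x"] q by simp
  qed
  with q show ?thesis by simp
qed

locale hub_cycle_advice = hub_cycle +
  fixes A :: alg and a :: "bool list" and T :: nat
begin

definition Fast :: "(nat \<Rightarrow> nat \<Rightarrow> nat) set" where
  "Fast = {\<pi> \<in> Labelings. \<exists>t \<le> T. explores_in (pgraph_of \<pi>) A a 0 t}"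

definition run_time :: "(nat \<Rightarrow> nat \<Rightarrow> nat) \<Rightarrow> nat" where
  "run_time \<pi> = (SOME t. t \<le> T \<and> explores_in (pgraph_of \<pi>) A a 0 t)"

definition run_pos :: "(nat \<Rightarrow> nat \<Rightarrow> nat) \<Rightarrow> nat list" where
  "run_pos \<pi> = fst (cfg (pgraph_of \<pi>) A a 0 (run_time \<pi>))"

definition run_hist :: "(nat \<Rightarrow> nat \<Rightarrow> nat) \<Rightarrow> hist" where
  "run_hist \<pi> = snd (cfg (pgraph_of \<pi>) A a 0 (run_time \<pi>))"

lemma Fast_run_time:
  assumes "\<pi> \<in> Fast" shows "run_time \<pi> \<le> T \<and> explores_in (pgraph_of \<pi>) A a 0 (run_time \<pi>)"
proof -
  have "\<exists>t. t \<le> T \<and> explores_in (pgraph_of \<pi>) A a 0 t" using assms by (auto simp: Fast_def)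
  then show ?thesis unfolding run_time_def by (rule someI_ex)
qed

lemma hub_cycle_run_Fast:
  assumes "\<pi> \<in> Fast" shows "hub_cycle_run m n A a (run_time \<pi>) (run_pos \<pi>) (run_hist \<pi>) \<pi>"
proof -
  note explores = conjunct2[OF Fast_run_time[OF assms]]
  show ?thesis
    using explores_in_is_run[OF explores] assms hub_cycle_axioms
    by (simp add: hub_cycle_run_def hub_cycle_run_axioms_def run_pos_def run_hist_def Fast_def)
qed

abbreviation "fwd \<pi> \<equiv> forward_nodes (run_time \<pi>) (run_pos \<pi>)"
abbreviation "exit_of \<pi> \<equiv> exit_port (run_pos \<pi>) (run_hist \<pi>)"
abbreviation "spare_of \<pi> \<equiv> spare_ports \<pi> (run_pos \<pi>) (run_hist \<pi>)"

definition Choices :: "((nat \<Rightarrow> nat \<Rightarrow> nat) \<times> (nat \<Rightarrow> nat)) set" where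
  "Choices = Sigma Fast (\<lambda>\<pi>. PiE (fwd \<pi>) (spare_of \<pi>))"

definition swapped :: "(nat \<Rightarrow> nat \<Rightarrow> nat) \<Rightarrow> (nat \<Rightarrow> nat) \<Rightarrow> nat \<Rightarrow> nat \<Rightarrow> nat" where
  "swapped \<pi> j = (\<lambda>y. if y \<in> fwd \<pi> then \<pi> y \<circ> transpose (exit_of \<pi> y) (j y) else \<pi> y)"

definition fwd_to_next :: "(nat \<Rightarrow> nat \<Rightarrow> nat) \<Rightarrow> nat \<Rightarrow> bool" where
  "fwd_to_next \<pi> = (\<lambda>y. if y \<in> Cyc then y \<in> fwd \<pi> \<and> \<pi> y (exit_of \<pi> y) = m else undefined)"

definition encode :: "(nat \<Rightarrow> nat \<Rightarrow> nat) \<times> (nat \<Rightarrow> nat)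
    \<Rightarrow> (nat \<Rightarrow> nat \<Rightarrow> nat) \<times> nat set \<times> (nat \<Rightarrow> bool)" where
  "encode = (\<lambda>(\<pi>, j). (swapped \<pi> j, fwd \<pi>, fwd_to_next \<pi>))"

lemma Choices_spare:
  assumes "(\<pi>, j) \<in> Choices" and "y \<in> fwd \<pi>"
  shows "j y < m + 2 \<and> j y \<noteq> entry_port (run_pos \<pi>) (run_hist \<pi>) y
    \<and> j y \<noteq> exit_of \<pi> y \<and> \<pi> y (j y) < m"
  using assms by (auto simp: Choices_def spare_ports_def PiE_def Pi_def)

lemma swapped_in_Labelings:
  assumes choice: "(\<pi>, j) \<in> Choices" shows "swapped \<pi> j \<in> Labelings"
proof -
  interpret R: hub_cycle_run m n A a "run_time \<pi>" "run_pos \<pi>" "run_hist \<pi>" \<pi>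
    using choice hub_cycle_run_Fast by (simp add: Choices_def)
  show ?thesis unfolding Labelings_def mem_Collect_eq
  proof (intro allI conjI impI)
    fix y assume y: "y \<in> Cyc"
    show "swapped \<pi> j y permutes {..<m + 2}"
    proof (cases "y \<in> fwd \<pi>")
      case True
      have "transpose (exit_of \<pi> y) (j y) permutes {..<m+2}"
        using R.Fwd_ports[OF True] Choices_spare[OF choice True] by (intro permutes_swap_id) auto
      then show ?thesis
        using True Labelings_permutes[OF R.lab y] by (simp add: swapped_def permutes_compose)
    next
      case False then show ?thesis using Labelings_permutes[OF R.lab y] by (simp add: swapped_def)
    qed
  next
    fix y assume "y \<notin> Cyc"
    then show "swapped \<pi> j y = id"
      using R.lab R.Fwd_subset by (auto simp: swapped_def Labelings_def)
  qed
qed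

lemma encode_into: "encode ` Choices \<subseteq> Labelings \<times> Pow Cyc \<times> PiE Cyc (\<lambda>_. UNIV)"
proof
  fix z assume "z \<in> encode ` Choices"
  then obtain \<pi> j where choice: "(\<pi>, j) \<in> Choices" and z: "z = encode (\<pi>, j)" by auto
  interpret R: hub_cycle_run m n A a "run_time \<pi>" "run_pos \<pi>" "run_hist \<pi>" \<pi>
    using choice hub_cycle_run_Fast by (simp add: Choices_def)
  show "z \<in> Labelings \<times> Pow Cyc \<times> PiE Cyc (\<lambda>_. UNIV)"
    using z swapped_in_Labelings[OF choice] R.Fwd_subset
    by (auto simp: encode_def fwd_to_next_def PiE_def extensional_def)
qed

text \<open>The label through which a forward node is first entered is not affected by the swap.\<close>
lemma entry_label_swapped:
  assumes choice: "(\<pi>, j) \<in> Choices" and w: "w \<in> fwd \<pi>" and i: "i < run_time \<pi>"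
    and enters: "run_pos \<pi> ! Suc i = w" and new: "w \<notin> set (take (Suc i) (run_pos \<pi>))"
  shows "inv (\<pi> w) (nbr_index w (run_pos \<pi> ! i))
    = inv (swapped \<pi> j w) (nbr_index w (run_pos \<pi> ! i))"
proof -
  interpret R: hub_cycle_run m n A a "run_time \<pi>" "run_pos \<pi>" "run_hist \<pi>" \<pi>
    using choice hub_cycle_run_Fast by (simp add: Choices_def)
  have wY: "w \<in> Cyc" using w R.Fwd_subset by auto
  have fv: "first_visit (run_pos \<pi>) w = Suc i" unfolding first_visit_def
    using Least_nth_eq[of "Suc i" "run_pos \<pi>" w] enters new R.run_lengths i by simp
  define u where "u = run_pos \<pi> ! i"
  define p where "p = fst (run_hist \<pi> ! i)"
  note st = R.run_step[OF i, folded u_def p_def]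
  have "u < n" using R.run_pos_less i by (simp add: u_def)
  then have "snd (lport \<pi> u p) = inv (\<pi> w) (nbr_index w u)"
    using R.arrival_port[of u p w] st enters wY by simp
  then have entry: "entry_port (run_pos \<pi>) (run_hist \<pi>) w = inv (\<pi> w) (nbr_index w u)"
    using fv st by (simp add: entry_port_def)
  define c where "c = entry_port (run_pos \<pi>) (run_hist \<pi>) w"
  have "\<pi> w c = nbr_index w u" using entry Labelings_apply_inv[OF R.lab wY] by (simp add: c_def)
  moreover have "c \<noteq> exit_of \<pi> w" using R.Fwd_ports[OF w] by (simp add: c_def)
  moreover have "c \<noteq> j w" using Choices_spare[OF choice w] by (simp add: c_def)
  ultimately have "swapped \<pi> j w c = nbr_index w u" using w by (simp add: swapped_def)
  then have "inv (swapped \<pi> j w) (nbr_index w u) = c"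
    using Labelings_inv_apply[OF swapped_in_Labelings[OF choice] wY, of c] by simp
  then show ?thesis using entry by (simp add: c_def u_def)
qed

end

locale encoding_collision = hub_cycle_advice +
  fixes \<pi>1 \<pi>2 :: "nat \<Rightarrow> nat \<Rightarrow> nat" and j1 j2 :: "nat \<Rightarrow> nat"
  assumes choice1: "(\<pi>1, j1) \<in> Choices" and choice2: "(\<pi>2, j2) \<in> Choices"
    and same_code: "encode (\<pi>1, j1) = encode (\<pi>2, j2)"
begin

sublocale R1: hub_cycle_run m n A a "run_time \<pi>1" "run_pos \<pi>1" "run_hist \<pi>1" \<pi>1
  using choice1 hub_cycle_run_Fast by (simp add: Choices_def)

sublocale R2: hub_cycle_run m n A a "run_time \<pi>2" "run_pos \<pi>2" "run_hist \<pi>2" \<pi>2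
  using choice2 hub_cycle_run_Fast by (simp add: Choices_def)

lemma same_swapped: "swapped \<pi>1 j1 = swapped \<pi>2 j2"
  and same_fwd: "fwd \<pi>1 = fwd \<pi>2"
  and same_fwd_to_next: "fwd_to_next \<pi>1 = fwd_to_next \<pi>2"
  using same_code by (auto simp: encode_def)

lemma labels_agree_not_fwd: "y \<notin> fwd \<pi>1 \<Longrightarrow> \<pi>1 y = \<pi>2 y"
  using fun_cong[OF same_swapped, of y] same_fwd by (simp add: swapped_def)

lemma labels_agree_fwd:
  assumes y: "y \<in> fwd \<pi>1" and visited: "y \<in> set (take (Suc i) (run_pos \<pi>1))"
    and i1: "i < run_time \<pi>1" and i2: "i < run_time \<pi>2"
    and pos: "take (Suc i) (run_pos \<pi>1) = take (Suc i) (run_pos \<pi>2)"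
    and exits: "take (Suc i) (map fst (run_hist \<pi>1)) = take (Suc i) (map fst (run_hist \<pi>2))"
  shows "\<pi>1 y = \<pi>2 y \<and> j1 y = j2 y"
proof -
  have y2: "y \<in> fwd \<pi>2" using y same_fwd by simp
  have yY: "y \<in> Cyc" using y R1.Fwd_subset by auto
  have fv: "first_visit (run_pos \<pi>1) y = first_visit (run_pos \<pi>2) y"
    unfolding first_visit_def by (rule Least_nth_take_eq[OF visited pos])
  obtain k where k: "k < Suc i" "run_pos \<pi>1 ! k = y" using visited by (auto simp: in_set_conv_nth)
  then have "first_visit (run_pos \<pi>1) y \<le> k" unfolding first_visit_def by (blast intro: Least_le)
  with k(1) have "first_visit (run_pos \<pi>1) y < Suc i" by simp
  then have exit: "exit_of \<pi>1 y = exit_of \<pi>2 y"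
    using arg_cong[OF exits, of "\<lambda>xs. xs ! first_visit (run_pos \<pi>1) y"] fv i1 i2
      R1.run_lengths R2.run_lengths by (simp add: exit_port_def)
  define p where "p = exit_of \<pi>1 y"
  have "\<pi>1 y p = m \<longleftrightarrow> \<pi>2 y p = m"
    using fun_cong[OF same_fwd_to_next, of y] yY y y2 exit by (simp add: fwd_to_next_def p_def)
  moreover have "m \<le> \<pi>1 y p" "\<pi>1 y p < m + 2" "m \<le> \<pi>2 y p" "\<pi>2 y p < m + 2"
    using R1.Fwd_ports[OF y] R2.Fwd_ports[OF y2] exit by (simp_all add: p_def)
  ultimately have at_exit: "\<pi>1 y p = \<pi>2 y p" by linarith
  have swap: "\<pi>1 y \<circ> transpose p (j1 y) = \<pi>2 y \<circ> transpose p (j2 y)"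
    using fun_cong[OF same_swapped, of y] y y2 exit by (simp add: swapped_def p_def)
  have "inj (\<pi>1 y)" using Labelings_permutes[OF R1.lab yY] permutes_inj by blast
  with transpose_swap_cancel[OF swap at_exit] show ?thesis by simp
qed

lemma labels_agree_visited:
  assumes "v \<in> set (take (Suc i) (run_pos \<pi>1))"
    and "i < run_time \<pi>1" and "i < run_time \<pi>2"
    and "take (Suc i) (run_pos \<pi>1) = take (Suc i) (run_pos \<pi>2)"
    and "take (Suc i) (map fst (run_hist \<pi>1)) = take (Suc i) (map fst (run_hist \<pi>2))"
  shows "\<pi>1 v = \<pi>2 v"
proof (cases "v \<in> fwd \<pi>1")
  case True
  then show ?thesis using labels_agree_fwd[OF True assms] by simp
qed (rule labels_agree_not_fwd)

text \<open>
  Either \<open>w\<close> was visited before step \<open>i\<close>, or it is entered for the first time and the swap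
  at \<open>w\<close> does not touch its entry label.
\<close>
lemma entry_labels_agree:
  assumes i1: "i < run_time \<pi>1" and i2: "i < run_time \<pi>2"
    and pos: "take (Suc i) (run_pos \<pi>1) = take (Suc i) (run_pos \<pi>2)"
    and exits: "take (Suc i) (map fst (run_hist \<pi>1)) = take (Suc i) (map fst (run_hist \<pi>2))"
    and w: "w \<in> Cyc" and u: "u = run_pos \<pi>1 ! i" and p: "p = fst (run_hist \<pi>1 ! i)"
    and w1: "fst (lport \<pi>1 u p) = w" and w2: "fst (lport \<pi>2 u p) = w"
  shows "inv (\<pi>1 w) (nbr_index w u) = inv (\<pi>2 w) (nbr_index w u)"
proof (cases "w \<in> fwd \<pi>1 \<and> w \<notin> set (take (Suc i) (run_pos \<pi>1))")
  case True
  have u2: "run_pos \<pi>2 ! i = u" using arg_cong[OF pos, of "\<lambda>xs. xs ! i"] u by simp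
  have p2: "fst (run_hist \<pi>2 ! i) = p"
    using arg_cong[OF exits, of "\<lambda>xs. xs ! i"] p i1 i2 R1.run_lengths R2.run_lengths by simp
  have "run_pos \<pi>1 ! Suc i = w" using R1.run_step[OF i1] w1 u p by simp
  moreover have "run_pos \<pi>2 ! Suc i = w" using R2.run_step[OF i2] w2 u2 p2 by simp
  ultimately have "inv (\<pi>1 w) (nbr_index w u) = inv (swapped \<pi>1 j1 w) (nbr_index w u)"
    and "inv (\<pi>2 w) (nbr_index w u) = inv (swapped \<pi>2 j2 w) (nbr_index w u)"
    using entry_label_swapped[OF choice1 _ i1, of w] entry_label_swapped[OF choice2 _ i2, of w]
      True same_fwd pos u u2 by simp_all
  then show ?thesis using same_swapped by simp
next
  case False
  then consider "w \<notin> fwd \<pi>1" | "w \<in> set (take (Suc i) (run_pos \<pi>1))" by blast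
  then have "\<pi>1 w = \<pi>2 w"
    by cases (simp_all add: labels_agree_not_fwd labels_agree_visited[OF _ i1 i2 pos exits])
  then show ?thesis by simp
qed

lemma ports_agree:
  assumes i1: "i < run_time \<pi>1" and i2: "i < run_time \<pi>2"
    and pos: "take (Suc i) (run_pos \<pi>1) = take (Suc i) (run_pos \<pi>2)"
    and hist: "take i (run_hist \<pi>1) = take i (run_hist \<pi>2)"
    and exit: "fst (run_hist \<pi>1 ! i) = fst (run_hist \<pi>2 ! i)"
  shows "lport \<pi>1 (run_pos \<pi>1 ! i) (fst (run_hist \<pi>1 ! i))
    = lport \<pi>2 (run_pos \<pi>1 ! i) (fst (run_hist \<pi>1 ! i))"
proof -
  have exits: "take (Suc i) (map fst (run_hist \<pi>1)) = take (Suc i) (map fst (run_hist \<pi>2))"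
    using hist exit i1 i2 R1.run_lengths R2.run_lengths
      by (simp add: take_Suc_conv_app_nth take_map)
  define u where "u = run_pos \<pi>1 ! i"
  define p where "p = fst (run_hist \<pi>1 ! i)"
  note entry = entry_labels_agree[OF i1 i2 pos exits _ u_def p_def]
  have "u < n" using R1.run_pos_less i1 by (simp add: u_def)
  have "p < degree u" using R1.run_step[OF i1] by (simp add: u_def p_def)
  have "lport \<pi>1 u p = lport \<pi>2 u p"
  proof (cases "u < m")
    case True
    then have p': "p < n - m" using \<open>p < degree u\<close> by (simp add: degree_hub)
    then have "m + p \<in> Cyc" by (simp add: Cyc_iff)
    then show ?thesis
      using entry[of "m + p"] lport_hub[OF True p'] True by (simp add: nbr_index_def)
  next
    case False
    then have uY: "u \<in> Cyc" using \<open>u < n\<close> by (simp add: Cyc_iff)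
    have p': "p < m + 2" using \<open>p < degree u\<close> degree_Cyc[OF uY] by simp
    have "u \<in> set (take (Suc i) (run_pos \<pi>1))"
      using R1.run_lengths i1 by (auto simp: u_def in_set_conv_nth intro!: exI[of _ i])
    then have same_u: "\<pi>1 u = \<pi>2 u" using labels_agree_visited[OF _ i1 i2 pos exits] by blast
    define w where "w = nbr u (\<pi>1 u p)"
    have "w < m \<or> w \<in> Cyc"
      using nbr_less[OF uY Labelings_less[OF R1.lab uY p']] by (auto simp: Cyc_iff w_def)
    then show ?thesis using entry[of w] lport_Cyc[OF uY p', of \<pi>1] lport_Cyc[OF uY p', of \<pi>2] same_u
      by (auto simp: w_def Let_def)
  qed
  then show ?thesis by (simp add: u_def p_def)
qed

lemma runs_agree: "run_time \<pi>1 = run_time \<pi>2 \<and> run_pos \<pi>1 = run_pos \<pi>2 \<and> run_hist \<pi>1 = run_hist \<pi>2"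
proof (rule is_run_unique[OF R1.run R2.run])
  fix i assume "i < run_time \<pi>1" "i < run_time \<pi>2"
    "take (Suc i) (run_pos \<pi>1) = take (Suc i) (run_pos \<pi>2)"
    "take i (run_hist \<pi>1) = take i (run_hist \<pi>2)"
    "fst (run_hist \<pi>1 ! i) = fst (run_hist \<pi>2 ! i)"
  from ports_agree[OF this] show "port (pgraph_of \<pi>1) (run_pos \<pi>1 ! i) (fst (run_hist \<pi>1 ! i))
      = port (pgraph_of \<pi>2) (run_pos \<pi>1 ! i) (fst (run_hist \<pi>1 ! i))" by simp
qed simp

lemma collision_eq: "\<pi>1 = \<pi>2 \<and> j1 = j2"
proof -
  have agree_fwd: "\<pi>1 y = \<pi>2 y \<and> j1 y = j2 y" if y: "y \<in> fwd \<pi>1" for y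
  proof -
    define i where "i = first_visit (run_pos \<pi>1) y"
    have i: "i < run_time \<pi>1" "run_pos \<pi>1 ! i = y"
      using R1.Fwd_first_visit[OF y] by (simp_all add: i_def)
    then have "y \<in> set (take (Suc i) (run_pos \<pi>1))"
      using R1.run_lengths by (auto simp: in_set_conv_nth intro!: exI[of _ i])
    then show ?thesis using labels_agree_fwd[OF y, of i] i(1) runs_agree by simp
  qed
  have "\<pi>1 y = \<pi>2 y" for y
    using agree_fwd[of y] labels_agree_not_fwd[of y] by (cases "y \<in> fwd \<pi>1") simp_all
  moreover have "j1 y = j2 y" for y
  proof (cases "y \<in> fwd \<pi>1")
    case False
    then have "y \<notin> fwd \<pi>2" using same_fwd by simp
    then show ?thesis
      using False choice1 choice2 by (auto simp: Choices_def PiE_def extensional_def)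
  qed (use agree_fwd in simp)
  ultimately show ?thesis by auto
qed

end

section \<open>Counting\<close>

lemma card_bool_lists_le: "card {xs :: bool list. length xs \<le> k} < 2 ^ Suc k"
proof -
  have "card {xs :: bool list. length xs \<le> k} = (\<Sum>i\<le>k. 2 ^ i)"
    using card_lists_length_le[of "UNIV :: bool set" k] by simp
  also have "\<dots> < 2 ^ Suc k" by (induction k) auto
  finally show ?thesis .
qed

context hub_cycle_advice
begin

lemma inj_on_encode: "inj_on encode Choices"
proof (rule inj_onI)
  fix c1 c2 assume "c1 \<in> Choices" "c2 \<in> Choices" "encode c1 = encode c2"
  then show "c1 = c2"
    using encoding_collision.collision_eq[of m n A a T "fst c1" "fst c2" "snd c1" "snd c2"]
    by (simp add: encoding_collision_def encoding_collision_axioms_def hub_cycle_advice_def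
        hub_cycle_axioms
        prod_eq_iff)
qed

lemma card_choices_of_Fast:
  assumes "\<pi> \<in> Fast"
  shows "(m - 2) ^ (2 * n - 2 * m - 2 - T) \<le> card (PiE (fwd \<pi>) (spare_of \<pi>))"
proof -
  interpret R: hub_cycle_run m n A a "run_time \<pi>" "run_pos \<pi>" "run_hist \<pi>" \<pi>
    using hub_cycle_run_Fast[OF assms] .
  have fin: "finite (fwd \<pi>)" using finite_subset[OF R.Fwd_subset] by (simp add: Cyc_def)
  have "(m - 2) ^ (2 * n - 2 * m - 2 - T) \<le> (m - 2) ^ card (fwd \<pi>)"
    using R.card_Fwd Fast_run_time[OF assms] m3 by (intro power_increasing) auto
  also have "\<dots> = (\<Prod>y\<in>fwd \<pi>. m - 2)" by simp
  also have "\<dots> \<le> (\<Prod>y\<in>fwd \<pi>. card (spare_of \<pi> y))" using R.card_spare by (intro prod_mono) auto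
  also have "\<dots> = card (PiE (fwd \<pi>) (spare_of \<pi>))" by (rule card_PiE[OF fin, symmetric])
  finally show ?thesis .
qed

lemma card_Fast_bound:
  "card Fast * (m - 2) ^ (2 * n - 2 * m - 2 - T) \<le> card Labelings * 4 ^ (n - m)"
proof -
  have finCyc: "finite Cyc" by (simp add: Cyc_def)
  have fin_Fast: "finite Fast"
    using finite_Labelings by (rule finite_subset[rotated]) (auto simp: Fast_def)
  have "finite (PiE (fwd \<pi>) (spare_of \<pi>))" for \<pi>
    by (rule finite_PiE) (auto simp: spare_ports_def forward_nodes_def Cyc_def)
  then have "card Choices = (\<Sum>\<pi>\<in>Fast. card (PiE (fwd \<pi>) (spare_of \<pi>)))"
    unfolding Choices_def using fin_Fast by (simp add: card_SigmaI)
  then have "card Fast * (m - 2) ^ (2 * n - 2 * m - 2 - T) \<le> card Choices"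
    using card_choices_of_Fast sum_mono[of Fast "\<lambda>_. (m - 2) ^ (2 * n - 2 * m - 2 - T)"] by simp
  also have "\<dots> = card (encode ` Choices)" using card_image[OF inj_on_encode] by simp
  also have "\<dots> \<le> card (Labelings \<times> Pow Cyc \<times> PiE Cyc (\<lambda>_. UNIV :: bool set))"
    by (rule card_mono[OF _ encode_into]) (simp add: finite_Labelings finCyc finite_PiE)
  also have "\<dots> = card Labelings * 4 ^ (n - m)"
    using finCyc
      by (simp add: card_cartesian_product card_Pow card_PiE Cyc_def power_mult_distrib[symmetric])
  finally show ?thesis .
qed

end

context hub_cycle
begin

lemma advice_count_bound:
  fixes A :: alg and f :: "pgraph \<Rightarrow> nat \<Rightarrow> bool list" and T k :: nat
  assumes fast: "\<forall>\<pi>\<in>Labelings. \<exists>t \<le> T. explores_in (pgraph_of \<pi>) A (f (pgraph_of \<pi>) 0) 0 t"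
    and short: "\<forall>\<pi>\<in>Labelings. length (f (pgraph_of \<pi>) 0) \<le> k"
  shows "(m - 2) ^ (2 * n - 2 * m - 2 - T) \<le> 2 ^ Suc k * 4 ^ (n - m)"
proof -
  define Adv where "Adv = {xs :: bool list. length xs \<le> k}"
  define K where "K = (m - 2) ^ (2 * n - 2 * m - 2 - T)"
  let ?Fast = "\<lambda>a. hub_cycle_advice.Fast m n A a T"
  have fin_Adv: "finite Adv" unfolding Adv_def
    using finite_lists_length_le[of "UNIV :: bool set" k] by simp
  have Fast_sub: "?Fast a \<subseteq> Labelings" for a
    using hub_cycle_axioms by (auto simp: hub_cycle_advice.Fast_def hub_cycle_advice_def)
  have "Labelings \<subseteq> (\<Union>a\<in>Adv. ?Fast a)"
  proof
    fix \<pi> assume "\<pi> \<in> Labelings"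
    then have "f (pgraph_of \<pi>) 0 \<in> Adv" "\<pi> \<in> ?Fast (f (pgraph_of \<pi>) 0)"
      using fast short hub_cycle_axioms
      by (simp_all add: Adv_def hub_cycle_advice.Fast_def hub_cycle_advice_def)
    then show "\<pi> \<in> (\<Union>a\<in>Adv. ?Fast a)" by blast
  qed
  then have "card Labelings \<le> card (\<Union>a\<in>Adv. ?Fast a)"
    using finite_Labelings Fast_sub fin_Adv by (intro card_mono) (auto intro: finite_subset)
  also have "\<dots> \<le> (\<Sum>a\<in>Adv. card (?Fast a))" by (rule card_UN_le[OF fin_Adv])
  finally have "card Labelings * K \<le> (\<Sum>a\<in>Adv. card (?Fast a)) * K" by simp
  also have "\<dots> = (\<Sum>a\<in>Adv. card (?Fast a) * K)" by (simp add: sum_distrib_right)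
  also have "\<dots> \<le> (\<Sum>a\<in>Adv. card Labelings * 4 ^ (n - m))"
    using hub_cycle_advice.card_Fast_bound hub_cycle_axioms
    by (intro sum_mono) (simp add: hub_cycle_advice_def K_def)
  also have "\<dots> = card Labelings * (card Adv * 4 ^ (n - m))" by simp
  finally have "K \<le> card Adv * 4 ^ (n - m)"
    using finite_Labelings id_in_Labelings card_gt_0_iff
      by (metis mult_le_cancel1 not_gr0 empty_iff)
  also have "\<dots> \<le> 2 ^ Suc k * 4 ^ (n - m)"
    using card_bool_lists_le[of k] by (simp add: Adv_def)
  finally show ?thesis by (simp add: K_def)
qed

lemma slow_hamiltonian_instance:
  fixes A :: alg and f :: "pgraph \<Rightarrow> nat \<Rightarrow> bool list" and \<epsilon> :: real
  assumes short: "\<forall>G. pg_wf G \<and> nv G = n \<longrightarrow> length (f G 0) \<le> k"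
    and count: "\<forall>T. real T \<le> real n + real n powr \<epsilon>
      \<longrightarrow> 2 ^ Suc k * 4 ^ (n - m) < (m - 2) ^ (2 * n - 2 * m - 2 - T)"
  shows "\<exists>G v. pg_wf G \<and> nv G = n \<and> hamiltonian G \<and> v < n \<and>
           \<not> (\<exists>t. real t < real n + real n powr \<epsilon> \<and> explores_in G A (f G v) v t)"
proof (rule ccontr)
  define T where "T = nat \<lfloor>real n + real n powr \<epsilon>\<rfloor>"
  assume all_fast: "\<not> ?thesis"
  have "\<exists>t \<le> T. explores_in (pgraph_of \<pi>) A (f (pgraph_of \<pi>) 0) 0 t" if lab: "\<pi> \<in> Labelings" for \<pi>
  proof -
    obtain t where t: "real t < real n + real n powr \<epsilon>"
      "explores_in (pgraph_of \<pi>) A (f (pgraph_of \<pi>) 0) 0 t"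
      using all_fast pg_wf_pgraph_of[OF lab] hamiltonian_pgraph_of[OF lab] mn by fastforce
    have "t \<le> T" unfolding T_def using t(1) by (intro le_nat_floor) simp
    with t(2) show ?thesis by blast
  qed
  then have "\<forall>\<pi>\<in>Labelings. \<exists>t \<le> T. explores_in (pgraph_of \<pi>) A (f (pgraph_of \<pi>) 0) 0 t" by blast
  moreover have "\<forall>\<pi>\<in>Labelings. length (f (pgraph_of \<pi>) 0) \<le> k" using short pg_wf_pgraph_of by simp
  ultimately have "(m - 2) ^ (2 * n - 2 * m - 2 - T) \<le> 2 ^ Suc k * 4 ^ (n - m)"
    by (rule advice_count_bound)
  moreover have "real T \<le> real n + real n powr \<epsilon>" unfolding T_def by (rule of_nat_floor) simp
  ultimately show False using count by (meson not_le)
qed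

end

lemma eventually_count_exceeds_advice:
  fixes \<epsilon> :: real assumes "\<epsilon> < 1"
  shows "\<forall>\<^sub>F n in at_top. \<forall>m k T. sqrt (real n) - 1 \<le> real m \<longrightarrow> real m \<le> sqrt (real n)
    \<longrightarrow> real k \<le> real n * log 2 (real n) / 8 \<longrightarrow> real T \<le> real n + real n powr \<epsilon>
    \<longrightarrow> 2 ^ Suc k * 4 ^ (n - m) < (m - 2) ^ (2 * n - 2 * m - 2 - T)"
proof -
  have "((\<lambda>x::real. x powr (\<epsilon> - 1)) \<longlongrightarrow> 0) at_top"
    using assms by (intro tendsto_neg_powr filterlim_ident) auto
  then have "\<forall>\<^sub>F n in at_top. real n powr (\<epsilon> - 1) < 1 / 8"
    by (rule order_tendstoD[OF filterlim_compose[OF _ filterlim_real_sequentially]]) simp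
  \<comment> \<open>Once \<open>n\<^sup>\<epsilon> \<le> n / 8\<close>, at least \<open>7n/8 - 2\<surd>n - 2\<close> nodes are forward nodes, each with
    at least \<open>\<surd>n - 3\<close> choices, against \<open>k + 1 + 2n\<close> bits.\<close>
  moreover have "\<forall>\<^sub>F n::nat in at_top. real n * log 2 (real n) / 8 + 2 * real n + 1
      < (7 * real n / 8 - 2 * sqrt (real n) - 2) * log 2 (sqrt (real n) - 3)"
    by real_asymp
  moreover have "\<forall>\<^sub>F n::nat in at_top. 4 \<le> sqrt (real n)" by real_asymp
  ultimately show ?thesis
  proof eventually_elim
    case (elim n)
    show ?case
    proof (intro allI impI)
      fix m k T
      assume m: "sqrt (real n) - 1 \<le> real m" "real m \<le> sqrt (real n)"
        and k: "real k \<le> real n * log 2 (real n) / 8" and T: "real T \<le> real n + real n powr \<epsilon>"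
      have "0 < n" using elim(3) by (cases n) auto
      then have "real n powr \<epsilon> = real n powr (\<epsilon> - 1) * real n" by (simp add: powr_diff)
      also have "\<dots> \<le> 1 / 8 * real n" using elim(1) by (intro mult_right_mono) auto
      finally have "real n powr \<epsilon> \<le> real n / 8" by simp
      then have s: "7 * real n / 8 - 2 * sqrt (real n) - 2 \<le> real (2 * n - 2 * m - 2 - T)"
        using m T by linarith
      have m2: "sqrt (real n) - 3 \<le> real (m - 2)" "2 < m" using m elim(3) by linarith+
      have "log 2 (real (2 ^ Suc k * 4 ^ (n - m))) = log 2 (2 ^ (Suc k + 2 * (n - m)))"
        by (simp only: power_add power_mult) simp
      also have "\<dots> = real k + 1 + 2 * real (n - m)" by (simp only: log_pow_cancel)
      also have "\<dots> < (7 * real n / 8 - 2 * sqrt (real n) - 2) * log 2 (sqrt (real n) - 3)"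
        using elim(2) k by simp
      also have "\<dots> \<le> real (2 * n - 2 * m - 2 - T) * log 2 (real (m - 2))"
        using s m2 elim(3) by (intro mult_mono) auto
      also have "\<dots> = log 2 (real ((m - 2) ^ (2 * n - 2 * m - 2 - T)))"
        using m2 by (simp add: log_nat_power)
      finally show "2 ^ Suc k * 4 ^ (n - m) < (m - 2) ^ (2 * n - 2 * m - 2 - T)"
        using m2 by (simp del: of_nat_power of_nat_mult)
    qed
  qed
qed

lemma eventually_slow_hamiltonian_instance:
  fixes \<epsilon> :: real and f :: "pgraph \<Rightarrow> nat \<Rightarrow> bool list" and A :: alg and M :: "nat \<Rightarrow> nat"
  assumes "\<epsilon> < 1"
    and M: "\<forall>\<^sub>F n in at_top. real (M n) \<le> real n * log 2 (real n) / 8"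
    and advice: "\<And>G. pg_wf G \<Longrightarrow> length (f G 0) \<le> M (nv G)"
  shows "\<forall>\<^sub>F n in at_top. \<exists>G v. pg_wf G \<and> nv G = n \<and> hamiltonian G \<and> v < n \<and>
           \<not> (\<exists>t. real t < real n + real n powr \<epsilon> \<and> explores_in G A (f G v) v t)"
proof -
  have "\<forall>\<^sub>F n::nat in at_top. 4 \<le> sqrt (real n)" by real_asymp
  moreover have "\<forall>\<^sub>F n::nat in at_top. 2 * sqrt (real n) + 3 \<le> real n" by real_asymp
  ultimately show ?thesis using M eventually_count_exceeds_advice[OF assms(1)]
  proof eventually_elim
    case (elim n)
    define m where "m = nat \<lfloor>sqrt (real n)\<rfloor>"
    have m: "sqrt (real n) - 1 \<le> real m" "real m \<le> sqrt (real n)"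
      using elim(1) by (auto simp: m_def)
    interpret hub_cycle m n using m elim(1,2) by unfold_locales linarith+
    show ?case using slow_hamiltonian_instance[of f "M n" \<epsilon> A] advice elim(3,4) m by blast
  qed
qed

theorem mainTheorem13:
  fixes \<epsilon> :: real
    and f :: "pgraph \<Rightarrow> nat \<Rightarrow> bool list"
    and A :: alg
  assumes "\<epsilon> < 1"
    and "(\<lambda>n. real (Max {length (f G v) | G v. pg_wf G \<and> nv G = n \<and> v < n}))
           \<in> o(\<lambda>n. real n * log 2 (real n))"
  shows "\<forall>N. \<exists>n \<ge> N. \<exists>G v. pg_wf G \<and> nv G = n \<and> hamiltonian G \<and> v < n \<and>
           \<not> (\<exists>t. real t < real n + real n powr \<epsilon> \<and> explores_in G A (f G v) v t)"
proof -
  define M where "M n = Max {length (f G v) | G v. pg_wf G \<and> nv G = n \<and> v < n}" for n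
  have "\<forall>\<^sub>F n in at_top. real (M n) \<le> 1 / 8 * \<bar>real n * log 2 (real n)\<bar>"
    using landau_o.smallD[OF assms(2), of "1 / 8"] by (simp add: M_def)
  then have "\<forall>\<^sub>F n in at_top. real (M n) \<le> real n * log 2 (real n) / 8"
    using eventually_ge_at_top[of 1] by eventually_elim (simp add: abs_of_nonneg)
  moreover have "length (f G 0) \<le> M (nv G)" if "pg_wf G" for G
    using length_advice_le_Max[OF that, of 0 f] that by (simp add: M_def pg_wf_def)
  ultimately have "\<forall>\<^sub>F n in at_top. \<exists>G v. pg_wf G \<and> nv G = n \<and> hamiltonian G \<and> v < n \<and>
           \<not> (\<exists>t. real t < real n + real n powr \<epsilon> \<and> explores_in G A (f G v) v t)"
    by (rule eventually_slow_hamiltonian_instance[OF assms(1)])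
  then show ?thesis by (simp add: frequently_sequentially[symmetric] eventually_frequently)
qed

end
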